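(* Under the GoRank setting described in the context, for every node $k\in[n]$ and every $t\ge1$, $$\mathbb{E}\big[|R_k(t)-r_k|^2\big]\le \frac{3}{c\,t}\,\sigma_k^2,\qquad\text{and consequently}\qquad \mathbb{E}\big[|R_k(t)-r_k|\big]\le \sqrt{\frac{3}{c\,t}}\;\sigma_k,$$ where $c=\lambda_2/|E|$ and $\sigma_k=n^{3/2}\sqrt{u_k(1-u_k)}$ with $u_k=(r_k-1)/n$.
   Context: Let $n\ge 2$ and let $\mathcal G=(V,E)$ be a connected, non-bipartite, undirected graph with vertex set $V=[n]$; $\mathbf{L}=\mathbf{D}-\mathbf{A}$ is its Laplacian and $\lambda_2>0$ the second smallest eigenvalue of $\mathbf{L}$. Node $k$ holds a real observation $X_k$, the $X_k$ being pairwise distinct, and its rank is $r_k=1+\sum_{l=1}^n\mathbb{I}_{\{X_k>X_l\}}$. Algorithm GoRank: initialize $Y_k(0)=X_k$ and $R'_k(0)=0$ for all $k$. At each iteration $s=1,2,\dots$: (i) every node $k$ sets $R'_k(s)=(1-1/s)R'_k(s-1)+(1/s)\,\mathbb{I}_{\{X_k>Y_k(s-1)\}}$ and $R_k(s)=nR'_k(s)+1$; (ii) an edge $(i,j)\in E$ is drawn uniformly at random from $E$, independently of everything before; (iii) the auxiliary values are swapped: $Y_i(s)=Y_j(s-1)$, $Y_j(s)=Y_i(s-1)$, others unchanged. Expectations are over the random edge sampling. *)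

theory Defs
  imports "HOL-Probability.Probability" "Jordan_Normal_Form.Char_Poly"
begin

definition graph_on :: "nat \<Rightarrow> nat set set \<Rightarrow> bool" where
  "graph_on n E \<longleftrightarrow> (\<forall>e\<in>E. e \<subseteq> {0..<n} \<and> card e = 2)"

definition adj_rel :: "nat set set \<Rightarrow> (nat \<times> nat) set" where
  "adj_rel E = {(a, b). {a, b} \<in> E}"

definition connected_graph :: "nat \<Rightarrow> nat set set \<Rightarrow> bool" where
  "connected_graph n E \<longleftrightarrow> (\<forall>i<n. \<forall>j<n. (i, j) \<in> (adj_rel E)\<^sup>*)"

definition bipartite_graph :: "nat \<Rightarrow> nat set set \<Rightarrow> bool" where
  "bipartite_graph n E \<longleftrightarrow> (\<exists>A B. A \<union> B = {0..<n} \<and> A \<inter> B = {} \<and>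
      (\<forall>e\<in>E. card (e \<inter> A) = 1 \<and> card (e \<inter> B) = 1))"

definition degree :: "nat set set \<Rightarrow> nat \<Rightarrow> nat" where
  "degree E i = card {e \<in> E. i \<in> e}"

definition laplacian :: "nat \<Rightarrow> nat set set \<Rightarrow> real mat" where
  "laplacian n E = mat n n (\<lambda>(i, j). (if i = j then real (degree E i) else 0)
                                    - (if {i, j} \<in> E then 1 else 0))"

definition sorted_eigenvalues :: "real mat \<Rightarrow> real list" where
  "sorted_eigenvalues M = sorted_list_of_multiset (proots (char_poly M))"

definition lambda2 :: "nat \<Rightarrow> nat set set \<Rightarrow> real" where
  "lambda2 n E = sorted_eigenvalues (laplacian n E) ! 1"

definition rank :: "nat \<Rightarrow> (nat \<Rightarrow> real) \<Rightarrow> nat \<Rightarrow> real" where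
  "rank n X k = 1 + (\<Sum>l<n. if X k > X l then 1 else 0)"

definition swap_edge :: "nat set \<Rightarrow> (nat \<Rightarrow> real) \<Rightarrow> (nat \<Rightarrow> real)" where
  "swap_edge e Y = (\<lambda>k. if k \<in> e then Y (THE l. l \<in> e \<and> l \<noteq> k) else Y k)"

text \<open>Auxiliary values Y(s), driven by the sequence of sampled edges es (es ! (s-1) is the
  edge drawn at iteration s).\<close>
fun gorank_Y :: "(nat \<Rightarrow> real) \<Rightarrow> nat set list \<Rightarrow> nat \<Rightarrow> (nat \<Rightarrow> real)" where
  "gorank_Y X es 0 = X"
| "gorank_Y X es (Suc s) = swap_edge (es ! s) (gorank_Y X es s)"

fun gorank_R' :: "(nat \<Rightarrow> real) \<Rightarrow> nat set list \<Rightarrow> nat \<Rightarrow> nat \<Rightarrow> real" where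
  "gorank_R' X es k 0 = 0"
| "gorank_R' X es k (Suc s) =
     (1 - 1 / real (Suc s)) * gorank_R' X es k s
     + (1 / real (Suc s)) * (if X k > gorank_Y X es s k then 1 else 0)"

definition gorank_R :: "nat \<Rightarrow> (nat \<Rightarrow> real) \<Rightarrow> nat set list \<Rightarrow> nat \<Rightarrow> nat \<Rightarrow> real" where
  "gorank_R n X es k s = real n * gorank_R' X es k s + 1"

text \<open>Distribution of the first t sampled edges: i.i.d. uniform on E, i.e. uniform on E^t.\<close>
definition edge_seqs :: "nat set set \<Rightarrow> nat \<Rightarrow> nat set list pmf" where
  "edge_seqs E t = pmf_of_set {es. length es = t \<and> set es \<subseteq> E}"

end

theory Submission
  imports Defs
begin

text \<open>
  Write \<open>W\<^sub>s = [X\<^sub>k > Y\<^sub>k(s)] - u\<close>, so that \<open>R\<^sub>k(t) - r\<^sub>k = (n/t) \<Sum>\<^sub>s\<^sub><\<^sub>t W\<^sub>s\<close>.  After \<open>s\<close> swaps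
  node \<open>k\<close> holds the observation of \<open>\<pi>(k)\<close> for a product \<open>\<pi>\<close> of random transpositions,
  so given the first \<open>s\<close> edges the expected value of \<open>W\<^sub>s\<^sub>+\<^sub>d\<close> is \<open>(P\<^sup>d h)(k)\<close>, where \<open>h\<close> is
  the centred comparison vector at time \<open>s\<close> and \<open>P = I - L/|E|\<close> is the averaged swap.
  Expanding \<open>(\<Sum> W\<^sub>s)\<^sup>2 = \<Sum>\<^sub>s W\<^sub>s (W\<^sub>s + 2 \<Sum>\<^sub>d W\<^sub>s\<^sub>+\<^sub>d)\<close> thus reduces the mean square error to
  terms \<open>h(k) ((I + 2P + \<dots> + 2P\<^sup>D) h)(k)\<close>.  As \<open>h\<close> is orthogonal to the constants, the
  eigenvalues of \<open>P\<close> that matter lie in \<open>[-1, 1 - c]\<close>, where \<open>|1 + 2 \<Sum>\<^sub>d \<rho>\<^sup>d| \<le> 3/c\<close>;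
  together with \<open>\<parallel>h\<parallel>\<^sup>2 = n u (1 - u)\<close> every term is at most \<open>(3/c) n u (1 - u)\<close>.  The first
  moment bound follows from \<open>E|Z| \<le> \<surd>(E Z\<^sup>2)\<close>.  The spectral theorem for the Laplacian is
  proved by maximising the Rayleigh quotient on compact spheres.
\<close>

subsection \<open>Vectors as functions\<close>

definition dot :: "nat \<Rightarrow> (nat \<Rightarrow> real) \<Rightarrow> (nat \<Rightarrow> real) \<Rightarrow> real" where
  "dot n x y = (\<Sum>j<n. x j * y j)"

definition mat_vec :: "nat \<Rightarrow> (nat \<Rightarrow> nat \<Rightarrow> real) \<Rightarrow> (nat \<Rightarrow> real) \<Rightarrow> nat \<Rightarrow> real" where
  "mat_vec n M x = (\<lambda>i. if i < n then \<Sum>j<n. M i j * x j else 0)"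

definition quad_form :: "nat \<Rightarrow> (nat \<Rightarrow> nat \<Rightarrow> real) \<Rightarrow> (nat \<Rightarrow> real) \<Rightarrow> real" where
  "quad_form n M x = dot n x (mat_vec n M x)"

definition symmetric_mat :: "nat \<Rightarrow> (nat \<Rightarrow> nat \<Rightarrow> real) \<Rightarrow> bool" where
  "symmetric_mat n M \<longleftrightarrow> (\<forall>i<n. \<forall>j<n. M i j = M j i)"

text \<open>Only the first \<open>n\<close> coordinates matter; pinning the others to zero makes the unit
  sphere compact in the product topology.\<close>
definition vanishes_from :: "nat \<Rightarrow> (nat \<Rightarrow> real) \<Rightarrow> bool" where
  "vanishes_from n x \<longleftrightarrow> (\<forall>j\<ge>n. x j = 0)"

definition orthonormal :: "nat \<Rightarrow> (nat \<Rightarrow> nat \<Rightarrow> real) \<Rightarrow> nat \<Rightarrow> bool" where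
  "orthonormal n q k \<longleftrightarrow> (\<forall>i<k. \<forall>i'<k. dot n (q i) (q i') = (if i = i' then 1 else 0))"

definition orthonormal_eigenvectors ::
    "nat \<Rightarrow> (nat \<Rightarrow> nat \<Rightarrow> real) \<Rightarrow> (nat \<Rightarrow> nat \<Rightarrow> real) \<Rightarrow> (nat \<Rightarrow> real) \<Rightarrow> nat \<Rightarrow> bool" where
  "orthonormal_eigenvectors n M q \<mu> k \<longleftrightarrow> orthonormal n q k \<and>
     (\<forall>i<k. vanishes_from n (q i) \<and> mat_vec n M (q i) = (\<lambda>j. \<mu> i * q i j))"

lemma dot_commute: "dot n x y = dot n y x"
  unfolding dot_def by (simp add: mult.commute)

lemma dot_mat_vec_symmetric:
  assumes "symmetric_mat n M"
  shows "dot n x (mat_vec n M y) = dot n (mat_vec n M x) y"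
proof -
  have "dot n x (mat_vec n M y) = (\<Sum>i<n. \<Sum>j<n. x i * M i j * y j)"
    unfolding dot_def mat_vec_def by (simp add: sum_distrib_left mult.assoc)
  also have "\<dots> = (\<Sum>j<n. \<Sum>i<n. x i * M i j * y j)" by (rule sum.swap)
  also have "\<dots> = (\<Sum>j<n. \<Sum>i<n. M j i * x i * y j)"
    using assms unfolding symmetric_mat_def by (intro sum.cong refl) (auto simp: mult.commute)
  also have "\<dots> = dot n (mat_vec n M x) y"
    unfolding dot_def mat_vec_def by (simp add: sum_distrib_right)
  finally show ?thesis .
qed

lemma dot_self_nonneg: "dot n x x \<ge> 0"
  unfolding dot_def by (auto intro: sum_nonneg)

lemma dot_self_eq_0D: "dot n x x = 0 \<Longrightarrow> j < n \<Longrightarrow> x j = 0"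
  unfolding dot_def by (subst (asm) sum_nonneg_eq_0_iff) auto

lemma square_le_dot_self: "j < n \<Longrightarrow> x j * x j \<le> dot n x x"
  unfolding dot_def by (rule member_le_sum[of j "{..<n}" "\<lambda>i. x i * x i"]) auto

lemma mult_le_of_dot_le:
  assumes "dot n g g \<le> B\<^sup>2 * dot n h h" "0 \<le> B" "k < n"
  shows "h k * g k \<le> B * dot n h h"
proof -
  have "(h k * g k)\<^sup>2 = (h k * h k) * (g k * g k)" by (simp add: power2_eq_square)
  also have "\<dots> \<le> dot n h h * (B\<^sup>2 * dot n h h)"
  proof (rule mult_mono)
    show "h k * h k \<le> dot n h h" by (rule square_le_dot_self[OF assms(3)])
    show "g k * g k \<le> B\<^sup>2 * dot n h h"
      using square_le_dot_self[OF assms(3), of g] assms(1) by linarith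
  qed (simp_all add: dot_self_nonneg)
  also have "\<dots> = (B * dot n h h)\<^sup>2" by (simp add: power2_eq_square)
  finally show ?thesis
    using assms(2) dot_self_nonneg[of n h] by (simp add: abs_le_square_iff[symmetric])
qed

lemma dot_add_left: "dot n (\<lambda>j. x j + y j) z = dot n x z + dot n y z"
  unfolding dot_def by (simp add: algebra_simps sum.distrib)

lemma dot_add_right: "dot n z (\<lambda>j. x j + y j) = dot n z x + dot n z y"
  unfolding dot_def by (simp add: algebra_simps sum.distrib)

lemma dot_diff_right: "dot n z (\<lambda>j. x j - y j) = dot n z x - dot n z y"
  unfolding dot_def by (simp add: algebra_simps sum_subtractf)

lemma dot_scale_left: "dot n (\<lambda>j. a * x j) z = a * dot n x z"
  unfolding dot_def by (simp add: algebra_simps sum_distrib_left)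

lemma dot_scale_right: "dot n z (\<lambda>j. a * x j) = a * dot n z x"
  unfolding dot_def by (simp add: algebra_simps sum_distrib_left)

lemma dot_sum_left: "dot n (\<lambda>j. \<Sum>i\<in>I. c i * y i j) z = (\<Sum>i\<in>I. c i * dot n (y i) z)"
  unfolding dot_def by (simp add: sum_distrib_right sum_distrib_left mult.assoc sum.swap[of _ I])

lemma mat_vec_add: "mat_vec n M (\<lambda>j. x j + y j) = (\<lambda>j. mat_vec n M x j + mat_vec n M y j)"
  unfolding mat_vec_def by (auto simp: algebra_simps sum.distrib)

lemma mat_vec_scale: "mat_vec n M (\<lambda>j. a * x j) = (\<lambda>j. a * mat_vec n M x j)"
  unfolding mat_vec_def by (auto simp: algebra_simps sum_distrib_left)

lemma mat_vec_sum: "mat_vec n M (\<lambda>l. \<Sum>i\<in>I. c i * y i l) j = (\<Sum>i\<in>I. c i * mat_vec n M (y i) j)"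
  unfolding mat_vec_def
  by (auto simp: sum_distrib_left algebra_simps intro: sum.swap)

lemma vanishes_from_mat_vec: "vanishes_from n (mat_vec n M x)"
  unfolding vanishes_from_def mat_vec_def by auto

lemma quad_form_scale: "quad_form n M (\<lambda>j. a * x j) = a\<^sup>2 * quad_form n M x"
  unfolding quad_form_def mat_vec_scale dot_scale_left dot_scale_right by (simp add: power2_eq_square)

lemma quad_form_eq_sum: "quad_form n M x = (\<Sum>j<n. \<Sum>l<n. x j * M j l * x l)"
  unfolding quad_form_def dot_def mat_vec_def by (simp add: sum_distrib_left mult.assoc)

lemma orthonormal_eigenvectors_dot_self:
  "orthonormal_eigenvectors n M q \<mu> k \<Longrightarrow> i < k \<Longrightarrow> dot n (q i) (q i) = 1"
  unfolding orthonormal_eigenvectors_def orthonormal_def by simp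

lemma orthonormal_eigenvectors_quad_form:
  "orthonormal_eigenvectors n M q \<mu> k \<Longrightarrow> i < k \<Longrightarrow> quad_form n M (q i) = \<mu> i"
  using orthonormal_eigenvectors_dot_self[of n M q \<mu> k i]
  unfolding orthonormal_eigenvectors_def quad_form_def by (simp add: dot_scale_right)

subsection \<open>Orthonormal systems\<close>

text \<open>The squared norms of the residuals sum to \<open>n - k\<close>: for \<open>k < n\<close> some residual is nonzero,
  and for \<open>k = n\<close> all vanish, which is completeness of the orthonormal system.\<close>
definition residual :: "nat \<Rightarrow> (nat \<Rightarrow> nat \<Rightarrow> real) \<Rightarrow> nat \<Rightarrow> nat \<Rightarrow> nat \<Rightarrow> real" where
  "residual n q k j = (\<lambda>l. (if l = j then 1 else 0) - (\<Sum>i<k. q i j * q i l))"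

lemma dot_residual:
  assumes "j < n"
  shows "dot n z (residual n q k j) = z j - (\<Sum>i<k. q i j * dot n z (q i))"
proof -
  have "dot n z (residual n q k j) = (\<Sum>l<n. z l * (if l = j then 1 else 0)) - (\<Sum>l<n. \<Sum>i<k. z l * (q i j * q i l))"
    unfolding dot_def residual_def by (simp add: right_diff_distrib sum_subtractf sum_distrib_left)
  also have "(\<Sum>l<n. z l * (if l = j then 1 else 0)) = (\<Sum>l<n. if l = j then z l else 0)"
    by (intro sum.cong) auto
  also have "(\<Sum>l<n. \<Sum>i<k. z l * (q i j * q i l)) = (\<Sum>i<k. q i j * dot n z (q i))"
    unfolding dot_def by (subst sum.swap) (simp add: sum_distrib_left algebra_simps)
  finally show ?thesis using assms by simp
qed

lemma dot_residual_orthogonal: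
  assumes "orthonormal n q k" "i < k" "j < n"
  shows "dot n (q i) (residual n q k j) = 0"
proof -
  have "(\<Sum>i'<k. q i' j * dot n (q i) (q i')) = (\<Sum>i'<k. if i' = i then q i j else 0)"
    using assms(1,2) unfolding orthonormal_def by (intro sum.cong refl) auto
  then show ?thesis using dot_residual[OF assms(3)] assms(2) by simp
qed

lemma sum_dot_residual_self:
  assumes "orthonormal n q k"
  shows "(\<Sum>j<n. dot n (residual n q k j) (residual n q k j)) = real n - real k"
proof -
  have "dot n (residual n q k j) (residual n q k j) = 1 - (\<Sum>i<k. q i j * q i j)" if "j < n" for j
    using dot_residual[OF that, of "residual n q k j"] dot_residual_orthogonal[OF assms _ that]
    by (simp add: dot_commute residual_def)
  then have "(\<Sum>j<n. dot n (residual n q k j) (residual n q k j)) = real n - (\<Sum>j<n. \<Sum>i<k. q i j * q i j)"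
    by (simp add: sum_subtractf)
  also have "(\<Sum>j<n. \<Sum>i<k. q i j * q i j) = (\<Sum>i<k. dot n (q i) (q i))"
    unfolding dot_def by (rule sum.swap)
  also have "\<dots> = real k"
    using assms unfolding orthonormal_def by simp
  finally show ?thesis .
qed

lemma exists_unit_orthogonal:
  assumes "orthonormal n q k" "\<forall>i<k. vanishes_from n (q i)" "k < n"
  shows "\<exists>x. vanishes_from n x \<and> dot n x x = 1 \<and> (\<forall>i<k. dot n (q i) x = 0)"
proof -
  have "\<exists>j<n. dot n (residual n q k j) (residual n q k j) > 0"
  proof (rule ccontr)
    assume "\<not> ?thesis"
    then have "(\<Sum>j<n. dot n (residual n q k j) (residual n q k j)) \<le> 0"
      by (intro sum_nonpos) (metis lessThan_iff not_less)
    then show False using sum_dot_residual_self[OF assms(1)] assms(3) by simp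
  qed
  then obtain j where j: "j < n" and pos: "dot n (residual n q k j) (residual n q k j) > 0" by blast
  define r where "r = residual n q k j"
  define x where "x = (\<lambda>l. (1 / sqrt (dot n r r)) * r l)"
  have "vanishes_from n x"
    using assms(2) j unfolding x_def r_def vanishes_from_def residual_def by auto
  moreover have "dot n x x = 1"
    unfolding x_def dot_scale_left dot_scale_right using pos by (simp add: r_def)
  moreover have "\<forall>i<k. dot n (q i) x = 0"
    unfolding x_def dot_scale_right using dot_residual_orthogonal[OF assms(1) _ j] by (simp add: r_def)
  ultimately show ?thesis by blast
qed

lemma orthonormal_expansion:
  assumes "orthonormal n q n" "j < n"
  shows "x j = (\<Sum>i<n. dot n (q i) x * q i j)"
proof -
  have "\<forall>j\<in>{..<n}. dot n (residual n q n j) (residual n q n j) = 0"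
    using sum_dot_residual_self[OF assms(1)] by (subst sum_nonneg_eq_0_iff[symmetric]) (auto intro: dot_self_nonneg)
  then have complete: "(\<Sum>i<n. q i j * q i l) = (if l = j then 1 else 0)" if "l < n" for l
    using dot_self_eq_0D[of n "residual n q n j" l] assms(2) that unfolding residual_def by fastforce
  have "(\<Sum>i<n. dot n (q i) x * q i j) = (\<Sum>l<n. (\<Sum>i<n. q i j * q i l) * x l)"
    unfolding dot_def sum_distrib_right by (subst sum.swap) (simp add: mult_ac)
  also have "\<dots> = (\<Sum>l<n. if l = j then x l else 0)"
    using complete by (intro sum.cong refl) auto
  finally show ?thesis using assms(2) by simp
qed

lemma dot_orthonormal_combination:
  assumes "orthonormal n q n"
  shows "dot n (\<lambda>j. \<Sum>i<n. b i * q i j) (\<lambda>j. \<Sum>i<n. b' i * q i j) = (\<Sum>i<n. b i * b' i)"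
proof -
  have "dot n (q i) (\<lambda>j. \<Sum>i<n. b' i * q i j) = b' i" if "i < n" for i
  proof -
    have "dot n (q i) (\<lambda>j. \<Sum>i<n. b' i * q i j) = (\<Sum>i'<n. b' i' * dot n (q i') (q i))"
      by (subst dot_commute) (rule dot_sum_left)
    also have "\<dots> = (\<Sum>i'<n. if i' = i then b' i else 0)"
      using assms that unfolding orthonormal_def by (intro sum.cong refl) auto
    finally show ?thesis using that by simp
  qed
  then show ?thesis by (simp add: dot_sum_left)
qed

lemma dot_self_orthonormal_expansion:
  assumes "orthonormal n q n" "\<And>j. j < n \<Longrightarrow> x j = (\<Sum>i<n. b i * q i j)"
  shows "dot n x x = (\<Sum>i<n. b i * b i)"
proof -
  have "dot n x x = dot n (\<lambda>j. \<Sum>i<n. b i * q i j) (\<lambda>j. \<Sum>i<n. b i * q i j)"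
    unfolding dot_def using assms(2) by (intro sum.cong) auto
  also have "\<dots> = (\<Sum>i<n. b i * b i)" by (rule dot_orthonormal_combination[OF assms(1)])
  finally show ?thesis .
qed

lemma orthonormal_extend:
  assumes "orthonormal n q k" "dot n v v = 1" "\<forall>i<k. dot n (q i) v = 0"
  shows "orthonormal n (q(k := v)) (Suc k)"
  using assms unfolding orthonormal_def by (auto simp: less_Suc_eq dot_commute)

subsection \<open>Spectral theorem\<close>

lemma continuous_on_dot:
  assumes "\<And>j. continuous_on S (\<lambda>x. a x j)" "\<And>j. continuous_on S (\<lambda>x. b x j)"
  shows "continuous_on S (\<lambda>x. dot n (a x) (b x))"
  unfolding dot_def by (intro continuous_on_sum continuous_on_mult assms)

lemma continuous_on_coordinate: "continuous_on S (\<lambda>x::nat \<Rightarrow> real. x j)"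
  by (rule continuous_on_subset[OF continuous_on_product_coordinates subset_UNIV])

lemma continuous_on_quad_form: "continuous_on S (quad_form n M)"
  unfolding quad_form_eq_sum
  by (intro continuous_on_sum continuous_on_mult continuous_on_const continuous_on_coordinate)

definition unit_orthogonal :: "nat \<Rightarrow> (nat \<Rightarrow> nat \<Rightarrow> real) \<Rightarrow> nat \<Rightarrow> (nat \<Rightarrow> real) set" where
  "unit_orthogonal n q k = {x. vanishes_from n x \<and> dot n x x = 1 \<and> (\<forall>i<k. dot n (q i) x = 0)}"

lemma compact_unit_orthogonal: "compact (unit_orthogonal n q k)"
proof -
  define B where "B = Pi UNIV (\<lambda>j::nat. if j < n then {-1..1::real} else {0})"
  have "compactin (product_topology (\<lambda>_. euclidean) UNIV) B"
    unfolding B_def PiE_UNIV_domain[symmetric]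
    by (rule compactin_PiE[THEN iffD2]) (auto simp: compactin_euclidean_iff)
  then have "compact B"
    by (simp only: euclidean_product_topology compactin_euclidean_iff)
  moreover have "closed (unit_orthogonal n q k)"
  proof -
    have "unit_orthogonal n q k = (\<Inter>j\<in>{n..}. {x. x j = 0}) \<inter> {x. dot n x x = 1} \<inter> (\<Inter>i\<in>{..<k}. {x. dot n (q i) x = 0})"
      unfolding unit_orthogonal_def vanishes_from_def by auto
    then show ?thesis
      by (auto intro!: closed_Int closed_INT closed_Collect_eq continuous_on_dot continuous_on_coordinate)
  qed
  moreover have "unit_orthogonal n q k \<subseteq> B"
  proof
    fix x assume x: "x \<in> unit_orthogonal n q k"
    have "\<bar>x j\<bar> \<le> 1" if "j < n" for j
      using square_le_dot_self[OF that, of x] x abs_square_le_1[of "x j"]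
      by (simp add: unit_orthogonal_def power2_eq_square)
    with x show "x \<in> B" by (auto simp: B_def unit_orthogonal_def vanishes_from_def abs_le_iff)
  qed
  ultimately show ?thesis
    using compact_Int_closed[of B "unit_orthogonal n q k"] by (simp add: Int_absorb1)
qed

lemma linear_coeff_nonpos:
  fixes b C :: real
  assumes "\<And>\<epsilon>. \<epsilon> > 0 \<Longrightarrow> \<epsilon> * b + \<epsilon>\<^sup>2 * C \<le> 0"
  shows "b \<le> 0"
proof (rule ccontr)
  assume "\<not> b \<le> 0"
  define \<epsilon> where "\<epsilon> = b / (\<bar>C\<bar> + 1)"
  have \<epsilon>: "\<epsilon> > 0" "\<epsilon> * \<bar>C\<bar> < b"
    using \<open>\<not> b \<le> 0\<close> by (auto simp: \<epsilon>_def field_simps)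
  have "\<epsilon> * (b - \<epsilon> * \<bar>C\<bar>) > 0" using \<epsilon> by simp
  moreover have "\<epsilon> * (b - \<epsilon> * \<bar>C\<bar>) \<le> \<epsilon> * b + \<epsilon>\<^sup>2 * C"
    using \<epsilon>(1) abs_ge_minus_self[of C] mult_left_mono[of "- C" "\<bar>C\<bar>" "\<epsilon> * \<epsilon>"]
    by (simp add: power2_eq_square algebra_simps)
  ultimately show False using assms[OF \<epsilon>(1)] by linarith
qed

lemma quad_form_perturb:
  assumes "symmetric_mat n M"
  shows "quad_form n M (\<lambda>j. x j + \<epsilon> * w j)
           = quad_form n M x + 2 * \<epsilon> * dot n w (mat_vec n M x) + \<epsilon>\<^sup>2 * quad_form n M w"
proof -
  have "dot n x (mat_vec n M w) = dot n w (mat_vec n M x)"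
    using dot_mat_vec_symmetric[OF assms, of x w] by (simp add: dot_commute)
  then show ?thesis
    unfolding quad_form_def mat_vec_add mat_vec_scale
    by (simp add: dot_add_left dot_add_right dot_scale_left dot_scale_right power2_eq_square algebra_simps)
qed

lemma rayleigh_maximizer_stationary:
  assumes sym: "symmetric_mat n M" and x: "x \<in> unit_orthogonal n q k"
    and max: "\<forall>y\<in>unit_orthogonal n q k. quad_form n M y \<le> quad_form n M x"
    and w: "vanishes_from n w" "\<forall>i<k. dot n (q i) w = 0" "dot n w x = 0"
  shows "dot n w (mat_vec n M x) \<le> 0"
proof -
  define \<theta> where "\<theta> = quad_form n M x"
  have x_unit: "dot n x x = 1" using x by (simp add: unit_orthogonal_def)
  have "2 * dot n w (mat_vec n M x) \<le> 0"
  proof (rule linear_coeff_nonpos)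
    fix \<epsilon> :: real assume "\<epsilon> > 0"
    define z where "z = (\<lambda>j. x j + \<epsilon> * w j)"
    have zz: "dot n z z = 1 + \<epsilon>\<^sup>2 * dot n w w"
      using x_unit w(3)
      by (simp add: z_def dot_add_left dot_add_right dot_scale_left dot_scale_right dot_commute[of n x w]
          power2_eq_square)
    then have zpos: "dot n z z > 0"
      using dot_self_nonneg[of n w] by (simp add: add_pos_nonneg)
    have "vanishes_from n z"
      using x w(1) by (simp add: unit_orthogonal_def vanishes_from_def z_def)
    moreover have "dot n (q i) z = 0" if "i < k" for i
      using x w(2) that by (simp add: unit_orthogonal_def z_def dot_add_right dot_scale_right)
    ultimately have "(\<lambda>j. (1 / sqrt (dot n z z)) * z j) \<in> unit_orthogonal n q k"
      using zpos unfolding unit_orthogonal_def mem_Collect_eq dot_scale_left dot_scale_right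
      by (simp add: vanishes_from_def)
    then have "quad_form n M (\<lambda>j. (1 / sqrt (dot n z z)) * z j) \<le> \<theta>"
      using max unfolding \<theta>_def by blast
    then have "quad_form n M z / dot n z z \<le> \<theta>"
      unfolding quad_form_scale using zpos by (simp add: power_divide)
    then have "\<theta> + 2 * \<epsilon> * dot n w (mat_vec n M x) + \<epsilon>\<^sup>2 * quad_form n M w \<le> \<theta> * (1 + \<epsilon>\<^sup>2 * dot n w w)"
      using zpos zz quad_form_perturb[OF sym, of x \<epsilon> w] by (simp add: z_def \<theta>_def divide_le_eq)
    then show "\<epsilon> * (2 * dot n w (mat_vec n M x)) + \<epsilon>\<^sup>2 * (quad_form n M w - \<theta> * dot n w w) \<le> 0"
      by (simp add: algebra_simps)
  qed
  then show ?thesis by simp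
qed

text \<open>The defect \<open>w = M x - \<theta> x\<close> of a maximiser is an admissible direction with
  \<open>\<langle>w, M x\<rangle> = \<parallel>w\<parallel>\<^sup>2\<close>, so it vanishes.\<close>
lemma rayleigh_maximizer_eigenvector:
  assumes sym: "symmetric_mat n M" and eig: "orthonormal_eigenvectors n M q \<mu> k"
    and x: "x \<in> unit_orthogonal n q k"
    and max: "\<forall>y\<in>unit_orthogonal n q k. quad_form n M y \<le> quad_form n M x"
  shows "mat_vec n M x = (\<lambda>j. quad_form n M x * x j)"
proof -
  define \<theta> where "\<theta> = quad_form n M x"
  define w where "w = (\<lambda>j. mat_vec n M x j - \<theta> * x j)"
  have x_unit: "dot n x x = 1" and x_orth: "\<forall>i<k. dot n (q i) x = 0"
    and x_vanishes: "vanishes_from n x"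
    using x by (auto simp: unit_orthogonal_def)
  have w_vanishes: "vanishes_from n w"
    using x_vanishes vanishes_from_mat_vec[of n M x] by (simp add: vanishes_from_def w_def)
  have w_orth: "\<forall>i<k. dot n (q i) w = 0"
  proof (intro allI impI)
    fix i assume "i < k"
    have "dot n (q i) (mat_vec n M x) = \<mu> i * dot n (q i) x"
      using dot_mat_vec_symmetric[OF sym] eig \<open>i < k\<close>
      by (simp add: orthonormal_eigenvectors_def dot_scale_left)
    then show "dot n (q i) w = 0" using x_orth \<open>i < k\<close> by (simp add: w_def dot_diff_right dot_scale_right)
  qed
  have wx: "dot n w x = 0"
  proof -
    have "dot n x w = 0"
      using x_unit by (simp add: w_def dot_diff_right dot_scale_right \<theta>_def quad_form_def)
    then show ?thesis by (simp add: dot_commute)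
  qed
  have "mat_vec n M x = (\<lambda>j. w j + \<theta> * x j)" by (simp add: w_def)
  then have "dot n w (mat_vec n M x) = dot n w w"
    using wx by (simp add: dot_add_right dot_scale_right)
  then have "dot n w w \<le> 0"
    using rayleigh_maximizer_stationary[OF sym x max w_vanishes w_orth wx] by simp
  then have "w j = 0" if "j < n" for j
    using dot_self_eq_0D[OF _ that] dot_self_nonneg[of n w] by (simp add: antisym)
  moreover have "mat_vec n M x j = 0" "x j = 0" if "\<not> j < n" for j
    using x_vanishes vanishes_from_mat_vec[of n M x] that by (auto simp: vanishes_from_def)
  ultimately show ?thesis
    unfolding \<theta>_def[symmetric] by (metis w_def eq_iff_diff_eq_0 mult_zero_right)
qed

lemma exists_orthogonal_eigenvector:
  assumes "symmetric_mat n M" "orthonormal_eigenvectors n M q \<mu> k" "k < n"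
  shows "\<exists>v \<theta>. v \<in> unit_orthogonal n q k \<and> mat_vec n M v = (\<lambda>j. \<theta> * v j)"
proof -
  have "unit_orthogonal n q k \<noteq> {}"
    using exists_unit_orthogonal[of n q k] assms(2,3)
    by (auto simp: orthonormal_eigenvectors_def unit_orthogonal_def)
  then obtain x where "x \<in> unit_orthogonal n q k"
    and "\<forall>y\<in>unit_orthogonal n q k. quad_form n M y \<le> quad_form n M x"
    using continuous_attains_sup[OF compact_unit_orthogonal _ continuous_on_quad_form] by blast
  with rayleigh_maximizer_eigenvector[OF assms(1,2)] show ?thesis by blast
qed

lemma orthonormal_eigenbasis_exists:
  assumes "symmetric_mat n M" "0 < n"
    and "vanishes_from n q0" "dot n q0 q0 = 1" "mat_vec n M q0 = (\<lambda>j. \<mu>0 * q0 j)"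
  shows "\<exists>q \<mu>. q 0 = q0 \<and> \<mu> 0 = \<mu>0 \<and> orthonormal_eigenvectors n M q \<mu> n"
proof -
  have "\<exists>q \<mu>. q 0 = q0 \<and> \<mu> 0 = \<mu>0 \<and> orthonormal_eigenvectors n M q \<mu> (Suc k)" if "k < n" for k
    using that
  proof (induction k)
    case 0
    then show ?case using assms(3-5)
      by (intro exI[of _ "\<lambda>_. q0"] exI[of _ "\<lambda>_. \<mu>0"])
        (simp add: orthonormal_eigenvectors_def orthonormal_def)
  next
    case (Suc k)
    then obtain q \<mu> where q: "q 0 = q0" "\<mu> 0 = \<mu>0" "orthonormal_eigenvectors n M q \<mu> (Suc k)"
      by auto
    obtain v \<theta> where "v \<in> unit_orthogonal n q (Suc k)" "mat_vec n M v = (\<lambda>j. \<theta> * v j)"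
      using exists_orthogonal_eigenvector[OF assms(1) q(3) Suc.prems] by blast
    then have "orthonormal_eigenvectors n M (q(Suc k := v)) (\<mu>(Suc k := \<theta>)) (Suc (Suc k))"
      using q(3) orthonormal_extend[of n q "Suc k" v]
      by (auto simp: orthonormal_eigenvectors_def unit_orthogonal_def less_Suc_eq)
    moreover have "(q(Suc k := v)) 0 = q0" "(\<mu>(Suc k := \<theta>)) 0 = \<mu>0" using q by simp_all
    ultimately show ?case by blast
  qed
  from this[of "n - 1"] show ?thesis using assms(2) by simp
qed

subsection \<open>Graphs and the Laplacian\<close>

definition edge_transp :: "nat set \<Rightarrow> nat \<Rightarrow> nat" where
  "edge_transp e k = (if k \<in> e then (THE l. l \<in> e \<and> l \<noteq> k) else k)"

lemma swap_edge_eq_comp: "swap_edge e Y = Y \<circ> edge_transp e"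
  unfolding swap_edge_def edge_transp_def by (auto simp: fun_eq_iff)

lemma edge_transp_left: "a \<noteq> b \<Longrightarrow> edge_transp {a, b} a = b"
  unfolding edge_transp_def by (auto intro!: the_equality)

lemma edge_transp_right: "a \<noteq> b \<Longrightarrow> edge_transp {a, b} b = a"
  using edge_transp_left[of b a] by (simp add: insert_commute)

lemma edge_transp_notin: "k \<notin> e \<Longrightarrow> edge_transp e k = k"
  unfolding edge_transp_def by simp

lemma graph_on_edgeE:
  assumes "graph_on n E" "e \<in> E"
  obtains a b where "a \<noteq> b" "a < n" "b < n" "e = {a, b}"
proof -
  have "card e = 2" "e \<subseteq> {0..<n}" using assms unfolding graph_on_def by auto
  then show ?thesis using that by (auto simp: card_2_iff)
qed

lemma graph_on_edge_less:
  assumes "graph_on n E" "{i, j} \<in> E"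
  shows "i < n" "j < n" "i \<noteq> j"
proof -
  have "card {i, j} = 2" "{i, j} \<subseteq> {0..<n}" using assms unfolding graph_on_def by auto
  then show "i < n" "j < n" "i \<noteq> j" by (auto split: if_splits)
qed

lemma graph_on_finite: "graph_on n E \<Longrightarrow> finite E"
  unfolding graph_on_def by (rule finite_subset[of _ "Pow {0..<n}"]) auto

lemma edge_transp_less:
  assumes "graph_on n E" "e \<in> E" "j < n"
  shows "edge_transp e j < n"
proof -
  obtain a b where "a \<noteq> b" "a < n" "b < n" "e = {a, b}" using graph_on_edgeE[OF assms(1,2)] .
  then show ?thesis
    using assms(3) edge_transp_left edge_transp_right edge_transp_notin by (cases "j = a \<or> j = b") auto
qed

lemma edge_transp_edge_transp:
  assumes "graph_on n E" "e \<in> E"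
  shows "edge_transp e (edge_transp e j) = j"
proof -
  obtain a b where "a \<noteq> b" "e = {a, b}" using graph_on_edgeE[OF assms] by metis
  then show ?thesis
    using edge_transp_left edge_transp_right edge_transp_notin by (cases "j = a \<or> j = b") auto
qed

lemma bij_betw_edge_transp:
  assumes "graph_on n E" "e \<in> E"
  shows "bij_betw (edge_transp e) {..<n} {..<n}"
  by (rule bij_betw_byWitness[where f' = "edge_transp e"])
    (use edge_transp_edge_transp[OF assms] edge_transp_less[OF assms] in auto)

fun swaps_perm :: "nat set list \<Rightarrow> nat \<Rightarrow> nat" where
  "swaps_perm [] = id"
| "swaps_perm (e # es) = edge_transp e \<circ> swaps_perm es"

lemma swaps_perm_append: "swaps_perm (xs @ ys) = swaps_perm xs \<circ> swaps_perm ys"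
  by (induction xs) auto

lemma bij_betw_swaps_perm:
  assumes "graph_on n E" "set es \<subseteq> E"
  shows "bij_betw (swaps_perm es) {..<n} {..<n}"
  using assms(2)
proof (induction es)
  case Nil
  then show ?case using bij_betw_id[of "{..<n}"] by (simp add: id_def)
next
  case (Cons e es)
  then show ?case
    using bij_betw_trans[OF _ bij_betw_edge_transp[OF assms(1)], of "swaps_perm es"] by (simp add: comp_def)
qed

lemma gorank_Y_eq_comp: "s \<le> length es \<Longrightarrow> gorank_Y X es s = X \<circ> swaps_perm (take s es)"
  by (induction s) (auto simp: swap_edge_eq_comp take_Suc_conv_app_nth swaps_perm_append)

lemma edges_nonempty:
  assumes "connected_graph n E" "2 \<le> n"
  shows "E \<noteq> {}"
proof
  assume "E = {}"
  then have "adj_rel E = {}" by (simp add: adj_rel_def)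
  moreover have "(0, 1) \<in> (adj_rel E)\<^sup>*" using assms unfolding connected_graph_def by auto
  ultimately show False by simp
qed

definition adjacency :: "nat set set \<Rightarrow> nat \<Rightarrow> nat \<Rightarrow> real" where
  "adjacency E i j = (if {i, j} \<in> E then 1 else 0)"

definition laplacian_fun :: "nat set set \<Rightarrow> nat \<Rightarrow> nat \<Rightarrow> real" where
  "laplacian_fun E i j = (if i = j then real (degree E i) else 0) - adjacency E i j"

lemma adjacency_commute: "adjacency E i j = adjacency E j i"
  unfolding adjacency_def by (simp add: insert_commute)

lemma laplacian_fun_entries: "i < n \<Longrightarrow> j < n \<Longrightarrow> laplacian n E $$ (i, j) = laplacian_fun E i j"
  unfolding laplacian_def laplacian_fun_def adjacency_def by simp

lemma symmetric_laplacian_fun: "symmetric_mat n (laplacian_fun E)"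
  unfolding symmetric_mat_def laplacian_fun_def using adjacency_commute by auto

lemma bij_betw_neighbours:
  assumes "graph_on n E" "i < n"
  shows "bij_betw (\<lambda>j. {i, j}) {j. j < n \<and> {i, j} \<in> E} {e \<in> E. i \<in> e}"
proof (rule bij_betw_byWitness[where f' = "\<lambda>e. edge_transp e i"])
  show "\<forall>j\<in>{j. j < n \<and> {i, j} \<in> E}. edge_transp {i, j} i = j"
    using graph_on_edge_less[OF assms(1)] edge_transp_left by blast
  show "\<forall>e\<in>{e \<in> E. i \<in> e}. {i, edge_transp e i} = e"
  proof
    fix e assume e: "e \<in> {e \<in> E. i \<in> e}"
    then obtain a b where "a \<noteq> b" "e = {a, b}" using graph_on_edgeE[OF assms(1)] by blast
    then show "{i, edge_transp e i} = e" using e edge_transp_left edge_transp_right by auto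
  qed
  show "(\<lambda>e. edge_transp e i) ` {e \<in> E. i \<in> e} \<subseteq> {j. j < n \<and> {i, j} \<in> E}"
  proof
    fix j assume "j \<in> (\<lambda>e. edge_transp e i) ` {e \<in> E. i \<in> e}"
    then obtain e where e: "e \<in> E" "i \<in> e" "j = edge_transp e i" by blast
    then obtain a b where "a \<noteq> b" "e = {a, b}" using graph_on_edgeE[OF assms(1)] by blast
    then have "{i, j} = e" using e edge_transp_left edge_transp_right by auto
    then show "j \<in> {j. j < n \<and> {i, j} \<in> E}" using e edge_transp_less[OF assms(1) e(1) assms(2)] by auto
  qed
qed auto

lemma degree_eq_sum_adjacency:
  assumes "graph_on n E" "i < n"
  shows "real (degree E i) = (\<Sum>j<n. adjacency E i j)"
proof -
  have "degree E i = card {j \<in> {..<n}. {i, j} \<in> E}"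
    unfolding degree_def using bij_betw_same_card[OF bij_betw_neighbours[OF assms]]
    by (simp add: conj_commute)
  then show ?thesis
    unfolding adjacency_def by (simp add: sum.inter_filter[symmetric])
qed

lemma degree_le_card: "graph_on n E \<Longrightarrow> degree E i \<le> card E"
  unfolding degree_def by (rule card_mono[OF graph_on_finite]) auto

lemma mat_vec_laplacian_fun:
  assumes "j < n"
  shows "mat_vec n (laplacian_fun E) x j = real (degree E j) * x j - (\<Sum>l<n. adjacency E j l * x l)"
proof -
  have "laplacian_fun E j l * x l = (if j = l then real (degree E j) * x l else 0) - adjacency E j l * x l" for l
    by (simp add: laplacian_fun_def left_diff_distrib)
  then have "mat_vec n (laplacian_fun E) x j
        = (\<Sum>l<n. if j = l then real (degree E j) * x l else 0) - (\<Sum>l<n. adjacency E j l * x l)"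
    unfolding mat_vec_def using assms by (simp add: sum_subtractf)
  then show ?thesis using assms by simp
qed

lemma quad_form_laplacian_fun:
  assumes "graph_on n E"
  shows "quad_form n (laplacian_fun E) x = (\<Sum>i<n. \<Sum>j<n. adjacency E i j * (x i - x j)\<^sup>2) / 2"
proof -
  have deg: "(\<Sum>i<n. real (degree E i) * x i * x i) = (\<Sum>i<n. \<Sum>j<n. adjacency E i j * x i * x i)"
    using degree_eq_sum_adjacency[OF assms] by (simp add: sum_distrib_right)
  have swap: "(\<Sum>i<n. \<Sum>j<n. adjacency E i j * x j * x j) = (\<Sum>i<n. \<Sum>j<n. adjacency E i j * x i * x i)"
    by (subst sum.swap) (simp add: adjacency_commute)
  have "quad_form n (laplacian_fun E) x
        = (\<Sum>i<n. x i * (real (degree E i) * x i - (\<Sum>j<n. adjacency E i j * x j)))"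
    unfolding quad_form_def dot_def by (intro sum.cong refl) (simp add: mat_vec_laplacian_fun)
  also have "\<dots> = (\<Sum>i<n. real (degree E i) * x i * x i) - (\<Sum>i<n. \<Sum>j<n. adjacency E i j * x i * x j)"
    by (simp add: right_diff_distrib sum_subtractf sum_distrib_left mult_ac)
  moreover have "(\<Sum>i<n. \<Sum>j<n. adjacency E i j * (x i - x j)\<^sup>2)
      = (\<Sum>i<n. \<Sum>j<n. adjacency E i j * x i * x i) + (\<Sum>i<n. \<Sum>j<n. adjacency E i j * x j * x j)
        - 2 * (\<Sum>i<n. \<Sum>j<n. adjacency E i j * x i * x j)"
    by (simp add: power2_eq_square algebra_simps sum.distrib sum_subtractf sum_distrib_left)
  ultimately show ?thesis using deg swap by linarith
qed

lemma quad_form_laplacian_fun_nonneg: "graph_on n E \<Longrightarrow> quad_form n (laplacian_fun E) x \<ge> 0"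
  unfolding quad_form_laplacian_fun by (auto intro!: sum_nonneg simp: adjacency_def)

lemma quad_form_laplacian_fun_eq_0_edge:
  assumes "graph_on n E" "quad_form n (laplacian_fun E) x = 0" "{i, j} \<in> E"
  shows "x i = x j"
proof -
  have i: "i < n" and j: "j < n" using graph_on_edge_less[OF assms(1,3)] by auto
  have nonneg: "\<And>i j. 0 \<le> adjacency E i j * (x i - x j)\<^sup>2" by (simp add: adjacency_def)
  have "(\<Sum>i<n. \<Sum>j<n. adjacency E i j * (x i - x j)\<^sup>2) = 0"
    using assms(2) unfolding quad_form_laplacian_fun[OF assms(1)] by simp
  then have "(\<Sum>j<n. adjacency E i j * (x i - x j)\<^sup>2) = 0"
    using i by (subst (asm) sum_nonneg_eq_0_iff) (auto intro!: sum_nonneg nonneg)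
  then have "adjacency E i j * (x i - x j)\<^sup>2 = 0"
    using j by (subst (asm) sum_nonneg_eq_0_iff) (auto intro: nonneg)
  then show ?thesis using assms(3) unfolding adjacency_def by simp
qed

lemma quad_form_laplacian_fun_eq_0_const:
  assumes "graph_on n E" "connected_graph n E" "quad_form n (laplacian_fun E) x = 0" "i < n" "j < n"
  shows "x i = x j"
proof -
  have "(i, j) \<in> (adj_rel E)\<^sup>*" using assms unfolding connected_graph_def by blast
  then show ?thesis
    by (induction rule: rtrancl_induct)
      (auto simp: adj_rel_def dest: quad_form_laplacian_fun_eq_0_edge[OF assms(1,3)])
qed

lemma quad_form_laplacian_fun_le:
  assumes "graph_on n E"
  shows "quad_form n (laplacian_fun E) x \<le> 2 * real (card E) * dot n x x"
proof -
  have swap: "(\<Sum>i<n. \<Sum>j<n. adjacency E i j * (x j)\<^sup>2) = (\<Sum>i<n. \<Sum>j<n. adjacency E i j * (x i)\<^sup>2)"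
    by (subst sum.swap) (simp add: adjacency_commute)
  have "(\<Sum>i<n. \<Sum>j<n. adjacency E i j * (x i - x j)\<^sup>2)
        \<le> (\<Sum>i<n. \<Sum>j<n. adjacency E i j * (2 * (x i)\<^sup>2 + 2 * (x j)\<^sup>2))"
  proof (intro sum_mono mult_left_mono)
    fix i j
    show "(x i - x j)\<^sup>2 \<le> 2 * (x i)\<^sup>2 + 2 * (x j)\<^sup>2"
      using zero_le_square[of "x i + x j"] by (simp add: power2_eq_square algebra_simps)
  qed (simp add: adjacency_def)
  also have "\<dots> = 2 * (\<Sum>i<n. \<Sum>j<n. adjacency E i j * (x i)\<^sup>2) + 2 * (\<Sum>i<n. \<Sum>j<n. adjacency E i j * (x j)\<^sup>2)"
    by (simp add: algebra_simps sum.distrib sum_distrib_left)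
  also have "\<dots> = 4 * (\<Sum>i<n. \<Sum>j<n. adjacency E i j * (x i)\<^sup>2)"
    unfolding swap by simp
  also have "\<dots> = 4 * (\<Sum>i<n. real (degree E i) * (x i)\<^sup>2)"
    using degree_eq_sum_adjacency[OF assms] by (simp add: sum_distrib_right)
  also have "\<dots> \<le> 4 * (\<Sum>i<n. real (card E) * (x i)\<^sup>2)"
    using degree_le_card[OF assms] by (intro mult_left_mono sum_mono mult_right_mono) auto
  also have "\<dots> = 2 * (2 * real (card E) * dot n x x)"
    by (simp add: dot_def sum_distrib_left power2_eq_square)
  finally show ?thesis by (simp add: quad_form_laplacian_fun[OF assms])
qed

subsection \<open>The spectrum of the Laplacian\<close>

lemma index_mult_mat_sum:
  assumes "A \<in> carrier_mat n n" "B \<in> carrier_mat n n" "i < n" "j < n"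
  shows "(A * B) $$ (i, j) = (\<Sum>l<n. A $$ (i, l) * B $$ (l, j))"
  using assms by (simp add: index_mult_mat scalar_prod_def atLeast0LessThan)

lemma char_poly_eq_prod_eigenvalues:
  fixes A :: "real mat"
  assumes A: "A \<in> carrier_mat n n" and entries: "\<And>i j. i < n \<Longrightarrow> j < n \<Longrightarrow> A $$ (i, j) = M i j"
    and eig: "orthonormal_eigenvectors n M q \<mu> n"
  shows "char_poly A = (\<Prod>a\<leftarrow>map \<mu> [0..<n]. [:- a, 1:])"
proof -
  define Q where "Q = mat n n (\<lambda>(j, i). q i j)"
  define D where "D = mat n n (\<lambda>(i, j). if i = j then \<mu> i else 0)"
  have Q: "Q \<in> carrier_mat n n" and QT: "transpose_mat Q \<in> carrier_mat n n" and D: "D \<in> carrier_mat n n"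
    by (simp_all add: Q_def D_def)
  have QTQ: "transpose_mat Q * Q = 1\<^sub>m n"
  proof (rule eq_matI)
    fix i j assume "i < dim_row (1\<^sub>m n)" "j < dim_col (1\<^sub>m n)"
    then have i: "i < n" and j: "j < n" by auto
    have "(transpose_mat Q * Q) $$ (i, j) = (\<Sum>l<n. q i l * q j l)"
      unfolding index_mult_mat_sum[OF QT Q i j] using i j Q by (intro sum.cong refl) (simp add: Q_def)
    then show "(transpose_mat Q * Q) $$ (i, j) = 1\<^sub>m n $$ (i, j)"
      using eig i j by (simp add: orthonormal_eigenvectors_def orthonormal_def dot_def)
  qed (use QT Q in auto)
  have QQT: "Q * transpose_mat Q = 1\<^sub>m n" by (rule mat_mult_left_right_inverse[OF QT Q QTQ])
  have AQ: "A * Q = Q * D"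
  proof (rule eq_matI)
    fix j i assume "j < dim_row (Q * D)" "i < dim_col (Q * D)"
    then have j: "j < n" and i: "i < n" using Q D by auto
    have "(A * Q) $$ (j, i) = (\<Sum>l<n. M j l * q i l)"
      unfolding index_mult_mat_sum[OF A Q j i] using i j by (intro sum.cong refl) (simp add: entries Q_def)
    also have "\<dots> = mat_vec n M (q i) j" using j by (simp add: mat_vec_def)
    also have "\<dots> = (\<Sum>l<n. q l j * (if l = i then \<mu> i else 0))"
      using eig i by (simp add: orthonormal_eigenvectors_def mult.commute if_distrib cong: if_cong)
    also have "\<dots> = (Q * D) $$ (j, i)"
      unfolding index_mult_mat_sum[OF Q D j i] using i j by (intro sum.cong refl) (simp add: Q_def D_def)
    finally show "(A * Q) $$ (j, i) = (Q * D) $$ (j, i)" .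
  qed (use A Q D in auto)
  have "A = A * (Q * transpose_mat Q)" using A by (simp add: QQT)
  also have "\<dots> = (A * Q) * transpose_mat Q" using A Q QT by (simp add: assoc_mult_mat)
  also have "\<dots> = Q * D * transpose_mat Q" by (simp only: AQ)
  finally have "similar_mat A D"
    unfolding similar_mat_def using similar_mat_witI[OF QQT QTQ _ A D Q QT] by blast
  then have "char_poly A = char_poly D" by (rule char_poly_similar)
  also have "\<dots> = (\<Prod>a\<leftarrow>diag_mat D. [:- a, 1:])"
    by (rule char_poly_upper_triangular[OF D]) (auto simp: upper_triangular_def D_def)
  also have "diag_mat D = map \<mu> [0..<n]" by (simp add: diag_mat_def D_def)
  finally show ?thesis .
qed

lemma proots_prod_linear_factors: "proots (\<Prod>a\<leftarrow>xs. [:- a, 1:]) = mset (xs :: real list)"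
proof (induction xs)
  case (Cons a xs)
  have "(\<Prod>a\<leftarrow>xs. [:- a, 1:]) \<noteq> 0" by (auto simp: prod_list_zero_iff)
  then show ?case
    using Cons.IH proots_mult[of "[:- a, 1:]" "\<Prod>a\<leftarrow>xs. [:- a, 1:]"] proots_linear_factor[of "- a"]
    by simp
qed simp

lemma sort_Cons_nth_1:
  fixes x :: "'a::linorder"
  assumes "ys \<noteq> []" "\<forall>y\<in>set ys. x \<le> y"
  shows "sort (x # ys) ! 1 = Min (set ys)"
proof -
  have "sort ys \<noteq> []" using assms(1) by (metis length_0_conv length_sort)
  then obtain y zs where yzs: "sort ys = y # zs" by (cases "sort ys") auto
  have "set (y # zs) = set ys" by (metis yzs set_sort)
  moreover have "sorted (y # zs)" by (metis yzs sorted_sort)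
  ultimately have "y \<in> set ys" "\<forall>z\<in>set ys. y \<le> z" by auto
  then have "y = Min (set ys)" by (intro Min_eqI[symmetric]) auto
  moreover have "sort (x # ys) = x # y # zs" using yzs assms(2) \<open>y \<in> set ys\<close> by simp
  ultimately show ?thesis by simp
qed

lemma laplacian_const_eigenvector:
  assumes "graph_on n E"
  shows "mat_vec n (laplacian_fun E) (\<lambda>j. if j < n then c else 0) = (\<lambda>_. 0)"
proof
  fix j show "mat_vec n (laplacian_fun E) (\<lambda>j. if j < n then c else 0) j = 0"
  proof (cases "j < n")
    case True
    have "(\<Sum>l<n. adjacency E j l * (if l < n then c else 0)) = (\<Sum>l<n. adjacency E j l) * c"
      by (simp add: sum_distrib_right)
    then show ?thesis
      using True by (simp add: mat_vec_laplacian_fun degree_eq_sum_adjacency[OF assms True])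
  qed (simp add: mat_vec_def)
qed

lemma laplacian_eigenvalue_pos:
  assumes "graph_on n E" "connected_graph n E" "orthonormal_eigenvectors n (laplacian_fun E) q \<mu> n"
    and q0: "\<And>j. j < n \<Longrightarrow> q 0 j = c" and "c \<noteq> 0" and i: "1 \<le> i" "i < n"
  shows "0 < \<mu> i"
proof (rule ccontr)
  assume "\<not> 0 < \<mu> i"
  then have "quad_form n (laplacian_fun E) (q i) = 0"
    using quad_form_laplacian_fun_nonneg[OF assms(1), of "q i"]
      orthonormal_eigenvectors_quad_form[OF assms(3) i(2)] by simp
  then have "q i j = q i 0" if "j < n" for j
    using quad_form_laplacian_fun_eq_0_const[OF assms(1,2)] that i by simp
  then obtain a where const: "\<And>j. j < n \<Longrightarrow> q i j = a" by blast
  have "0 = dot n (q 0) (q i)"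
    using assms(3) i unfolding orthonormal_eigenvectors_def orthonormal_def by simp
  also have "\<dots> = real n * c * a"
    by (simp add: dot_def q0 const)
  finally have "a = 0" using \<open>c \<noteq> 0\<close> i by simp
  then have "dot n (q i) (q i) = 0" by (simp add: dot_def const)
  then show False using orthonormal_eigenvectors_dot_self[OF assms(3) i(2)] by simp
qed

lemma lambda2_eq_Min_eigenvalues:
  assumes eig: "orthonormal_eigenvectors n (laplacian_fun E) q \<mu> n" and "\<mu> 0 = 0" "2 \<le> n"
    and "\<And>i. 1 \<le> i \<Longrightarrow> i < n \<Longrightarrow> 0 \<le> \<mu> i"
  shows "lambda2 n E = Min (\<mu> ` {1..<n})"
proof -
  have "char_poly (laplacian n E) = (\<Prod>a\<leftarrow>map \<mu> [0..<n]. [:- a, 1:])"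
    by (rule char_poly_eq_prod_eigenvalues[OF _ laplacian_fun_entries eig]) (simp add: laplacian_def)
  then have "sorted_eigenvalues (laplacian n E) = sort (map \<mu> [0..<n])"
    by (simp only: sorted_eigenvalues_def proots_prod_linear_factors sorted_list_of_multiset_mset)
  also have "map \<mu> [0..<n] = 0 # map \<mu> [1..<n]"
    using assms(2,3) by (simp add: upt_conv_Cons)
  finally have "lambda2 n E = sort (0 # map \<mu> [1..<n]) ! 1" by (simp add: lambda2_def)
  also have "\<dots> = Min (\<mu> ` {1..<n})"
    using assms(3,4) by (subst sort_Cons_nth_1) auto
  finally show ?thesis .
qed

lemma laplacian_spectrum:
  assumes g: "graph_on n E" and conn: "connected_graph n E" and n: "2 \<le> n"
  obtains q \<mu> where "orthonormal_eigenvectors n (laplacian_fun E) q \<mu> n"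
    "\<And>j. j < n \<Longrightarrow> q 0 j = 1 / sqrt (real n)"
    "\<And>i. 1 \<le> i \<Longrightarrow> i < n \<Longrightarrow> lambda2 n E \<le> \<mu> i \<and> \<mu> i \<le> 2 * real (card E)"
    "0 < lambda2 n E"
proof -
  define q0 where "q0 = (\<lambda>j. if j < n then 1 / sqrt (real n) else 0)"
  have "dot n q0 q0 = 1"
    using n by (simp add: dot_def q0_def)
  moreover have "mat_vec n (laplacian_fun E) q0 = (\<lambda>j. 0 * q0 j)"
    using laplacian_const_eigenvector[OF g] by (simp add: q0_def)
  ultimately have "\<exists>q \<mu>. q 0 = q0 \<and> \<mu> 0 = 0 \<and> orthonormal_eigenvectors n (laplacian_fun E) q \<mu> n"
    using n by (intro orthonormal_eigenbasis_exists symmetric_laplacian_fun) (auto simp: q0_def vanishes_from_def)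
  then obtain q \<mu> where q: "q 0 = q0" "\<mu> 0 = 0" and eig: "orthonormal_eigenvectors n (laplacian_fun E) q \<mu> n"
    by blast
  have q0_const: "q 0 j = 1 / sqrt (real n)" if "j < n" for j
    using that by (simp add: q q0_def)
  have pos: "0 < \<mu> i" if "1 \<le> i" "i < n" for i
    using laplacian_eigenvalue_pos[OF g conn eig q0_const _ that] n by simp
  have le: "\<mu> i \<le> 2 * real (card E)" if "i < n" for i
    using quad_form_laplacian_fun_le[OF g, of "q i"] orthonormal_eigenvectors_quad_form[OF eig that]
      orthonormal_eigenvectors_dot_self[OF eig that] by simp
  have l2: "lambda2 n E = Min (\<mu> ` {1..<n})"
    using lambda2_eq_Min_eigenvalues[OF eig q(2) n] pos by (simp add: less_imp_le)
  have "lambda2 n E \<le> \<mu> i" if "1 \<le> i" "i < n" for i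
    unfolding l2 using that by (intro Min_le) auto
  moreover have "0 < lambda2 n E"
    unfolding l2 using n pos by (subst Min_gr_iff) auto
  ultimately show thesis
    using that[OF eig q0_const] le by blast
qed

lemma spectral_gap_pos:
  assumes "graph_on n E" "connected_graph n E" "2 \<le> n"
  shows "0 < lambda2 n E / real (card E)"
proof -
  have "0 < lambda2 n E" by (rule laplacian_spectrum[OF assms])
  then show ?thesis using graph_on_finite[OF assms(1)] edges_nonempty[OF assms(2,3)]
    by (simp add: card_gt_0_iff)
qed

subsection \<open>The averaged swap operator\<close>

definition swap_average :: "nat set set \<Rightarrow> (nat \<Rightarrow> real) \<Rightarrow> nat \<Rightarrow> real" where
  "swap_average E \<phi> j = (\<Sum>e\<in>E. \<phi> (edge_transp e j)) / real (card E)"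

lemma swap_average_cong:
  assumes "graph_on n E" "\<And>l. l < n \<Longrightarrow> \<phi> l = \<psi> l" "j < n"
  shows "swap_average E \<phi> j = swap_average E \<psi> j"
  unfolding swap_average_def using edge_transp_less[OF assms(1) _ assms(3)] assms(2)
  by (simp cong: sum.cong)

lemma sum_edge_transp:
  assumes g: "graph_on n E" and j: "j < n"
  shows "(\<Sum>e\<in>E. \<phi> (edge_transp e j))
           = real (card E - degree E j) * \<phi> j + (\<Sum>l<n. adjacency E j l * \<phi> l)"
proof -
  have fin: "finite E" by (rule graph_on_finite[OF g])
  have "(\<Sum>e\<in>E. \<phi> (edge_transp e j))
        = (\<Sum>e\<in>E - {e \<in> E. j \<in> e}. \<phi> (edge_transp e j)) + (\<Sum>e\<in>{e \<in> E. j \<in> e}. \<phi> (edge_transp e j))"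
    using fin by (intro sum.subset_diff) auto
  also have "(\<Sum>e\<in>E - {e \<in> E. j \<in> e}. \<phi> (edge_transp e j)) = real (card E - degree E j) * \<phi> j"
    using fin by (simp add: edge_transp_notin card_Diff_subset degree_def)
  also have "(\<Sum>e\<in>{e \<in> E. j \<in> e}. \<phi> (edge_transp e j)) = (\<Sum>l\<in>{l. l < n \<and> {j, l} \<in> E}. \<phi> (edge_transp {j, l} j))"
    by (rule sum.reindex_bij_betw[OF bij_betw_neighbours[OF g j], symmetric])
  also have "\<dots> = (\<Sum>l\<in>{l \<in> {..<n}. {j, l} \<in> E}. \<phi> l)"
    using graph_on_edge_less[OF g] edge_transp_left by (intro sum.cong) auto
  also have "\<dots> = (\<Sum>l<n. if {j, l} \<in> E then \<phi> l else 0)"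
    by (rule sum.inter_filter) simp
  also have "\<dots> = (\<Sum>l<n. adjacency E j l * \<phi> l)"
    by (intro sum.cong) (auto simp: adjacency_def)
  finally show ?thesis .
qed

lemma swap_average_eq_laplacian:
  assumes "graph_on n E" "E \<noteq> {}" "j < n"
  shows "swap_average E \<phi> j = \<phi> j - mat_vec n (laplacian_fun E) \<phi> j / real (card E)"
proof -
  have "real (card E) > 0" using assms(1,2) graph_on_finite by (simp add: card_gt_0_iff)
  then show ?thesis
    using degree_le_card[OF assms(1), of j]
    by (simp add: swap_average_def sum_edge_transp[OF assms(1,3)] mat_vec_laplacian_fun[OF assms(3)]
        field_simps of_nat_diff)
qed

lemma swap_average_power_eigenbasis:
  assumes g: "graph_on n E" and ne: "E \<noteq> {}" and eig: "orthonormal_eigenvectors n (laplacian_fun E) q \<mu> n"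
    and \<phi>: "\<And>j. j < n \<Longrightarrow> \<phi> j = (\<Sum>i<n. a i * q i j)" and "j < n"
  shows "(swap_average E ^^ d) \<phi> j = (\<Sum>i<n. a i * (1 - \<mu> i / real (card E)) ^ d * q i j)"
  using \<open>j < n\<close>
proof (induction d arbitrary: j)
  case 0
  then show ?case using \<phi> by simp
next
  case (Suc d)
  define \<psi> where "\<psi> = (\<lambda>l. \<Sum>i<n. a i * (1 - \<mu> i / real (card E)) ^ d * q i l)"
  have "(swap_average E ^^ Suc d) \<phi> j = swap_average E ((swap_average E ^^ d) \<phi>) j" by simp
  also have "\<dots> = swap_average E \<psi> j"
    by (rule swap_average_cong[OF g _ Suc.prems]) (simp add: \<psi>_def Suc.IH)
  also have "\<dots> = \<psi> j - mat_vec n (laplacian_fun E) \<psi> j / real (card E)"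
    by (rule swap_average_eq_laplacian[OF g ne Suc.prems])
  also have "mat_vec n (laplacian_fun E) \<psi> j = (\<Sum>i<n. a i * (1 - \<mu> i / real (card E)) ^ d * (\<mu> i * q i j))"
    unfolding \<psi>_def mat_vec_sum using eig by (simp add: orthonormal_eigenvectors_def)
  also have "\<psi> j - \<dots> / real (card E) = (\<Sum>i<n. a i * (1 - \<mu> i / real (card E)) ^ Suc d * q i j)"
    unfolding \<psi>_def
    by (simp add: sum_divide_distrib sum_subtractf[symmetric] algebra_simps diff_divide_distrib)
  finally show ?case .
qed

lemma abs_geometric_series_le:
  fixes c \<rho> :: real
  assumes c: "0 < c" and \<rho>: "-1 \<le> \<rho>" "\<rho> \<le> 1 - c"
  shows "\<bar>1 + 2 * (\<Sum>d=1..D. \<rho> ^ d)\<bar> \<le> 3 / c"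
proof -
  define S where "S = (\<Sum>d=1..D. \<rho> ^ d)"
  have geo: "(1 - \<rho>) * S = \<rho> - \<rho> ^ Suc D"
  proof (cases "D = 0")
    case False
    then have "1 \<le> D" by simp
    from sum_gp_multiplied[OF this, of \<rho>] show ?thesis by (simp only: S_def power_one_right)
  qed (simp add: S_def)
  show ?thesis
  proof (cases "\<rho> \<ge> 0")
    case True
    then have S0: "S \<ge> 0" by (simp add: S_def sum_nonneg)
    have "c * S \<le> 1 - c"
    proof -
      have "c * S \<le> (1 - \<rho>) * S" using \<rho>(2) S0 by (intro mult_right_mono) auto
      moreover have "(1 - \<rho>) * S \<le> 1 - c" using geo True \<rho>(2) zero_le_power[OF True, of "Suc D"] by linarith
      ultimately show ?thesis by linarith
    qed
    then have "S \<le> (1 - c) / c" using c by (simp add: le_divide_eq mult.commute)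
    then have "1 + 2 * S \<le> 3 / c" using c by (simp add: field_simps)
    with S0 show ?thesis unfolding S_def[symmetric] by simp
  next
    case False
    then have "\<bar>\<rho>\<bar> \<le> 1" using \<rho> by simp
    then have "\<bar>\<rho> ^ Suc D\<bar> \<le> \<bar>\<rho>\<bar>"
      by (simp add: abs_mult power_abs mult_right_le_one_le power_le_one)
    then have lo: "(1 - \<rho>) * (-1) \<le> (1 - \<rho>) * S" and hi: "(1 - \<rho>) * S \<le> (1 - \<rho>) * 0"
      using geo False \<rho>(1) by (auto simp: abs_le_iff)
    have "0 < 1 - \<rho>" using False by simp
    then have "-1 \<le> S" "S \<le> 0"
      using mult_left_le_imp_le[OF lo] mult_left_le_imp_le[OF hi] by auto
    moreover have "1 \<le> 3 / c" using c \<rho> by (simp add: le_divide_eq)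
    ultimately show ?thesis unfolding S_def[symmetric] by simp
  qed
qed

lemma swap_series_eigenbasis:
  assumes g: "graph_on n E" and ne: "E \<noteq> {}" and eig: "orthonormal_eigenvectors n (laplacian_fun E) q \<mu> n"
    and h_exp: "\<And>j. j < n \<Longrightarrow> h j = (\<Sum>i<n. a i * q i j)" and j: "j < n"
  shows "h j + 2 * (\<Sum>d=1..D. (swap_average E ^^ d) h j)
           = (\<Sum>i<n. (a i * (1 + 2 * (\<Sum>d=1..D. (1 - \<mu> i / real (card E)) ^ d))) * q i j)"
proof -
  define \<rho> where "\<rho> i = 1 - \<mu> i / real (card E)" for i
  have "(\<Sum>d=1..D. (swap_average E ^^ d) h j) = (\<Sum>d=1..D. \<Sum>i<n. a i * \<rho> i ^ d * q i j)"
    using j by (simp add: swap_average_power_eigenbasis[OF g ne eig h_exp] \<rho>_def)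
  also have "\<dots> = (\<Sum>i<n. \<Sum>d=1..D. a i * \<rho> i ^ d * q i j)"
    by (rule sum.swap)
  also have "\<dots> = (\<Sum>i<n. a i * (\<Sum>d=1..D. \<rho> i ^ d) * q i j)"
    by (simp add: sum_distrib_left sum_distrib_right)
  finally have "h j + 2 * (\<Sum>d=1..D. (swap_average E ^^ d) h j)
      = (\<Sum>i<n. a i * q i j) + 2 * (\<Sum>i<n. a i * (\<Sum>d=1..D. \<rho> i ^ d) * q i j)"
    using j by (simp add: h_exp)
  then show ?thesis by (simp add: \<rho>_def sum.distrib sum_distrib_left algebra_simps)
qed

lemma dot_swap_series_le:
  fixes h :: "nat \<Rightarrow> real" and D :: nat
  assumes g: "graph_on n E" and conn: "connected_graph n E" and n: "2 \<le> n" and h: "(\<Sum>j<n. h j) = 0"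
  defines "G \<equiv> \<lambda>j. h j + 2 * (\<Sum>d=1..D. (swap_average E ^^ d) h j)"
  shows "dot n G G \<le> (3 / (lambda2 n E / real (card E)))\<^sup>2 * dot n h h"
proof -
  obtain q \<mu> where eig: "orthonormal_eigenvectors n (laplacian_fun E) q \<mu> n"
    and q0: "\<And>j. j < n \<Longrightarrow> q 0 j = 1 / sqrt (real n)"
    and \<mu>: "\<And>i. 1 \<le> i \<Longrightarrow> i < n \<Longrightarrow> lambda2 n E \<le> \<mu> i \<and> \<mu> i \<le> 2 * real (card E)"
    and l2: "0 < lambda2 n E"
    using laplacian_spectrum[OF g conn n] by blast
  have orth: "orthonormal n q n" using eig by (simp add: orthonormal_eigenvectors_def)
  have ne: "E \<noteq> {}" by (rule edges_nonempty[OF conn n])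
  define m where "m = real (card E)"
  have m: "m > 0" using ne graph_on_finite[OF g] by (simp add: m_def card_gt_0_iff)
  define c where "c = lambda2 n E / m"
  define a where "a i = dot n (q i) h" for i
  define p where "p i = 1 + 2 * (\<Sum>d=1..D. (1 - \<mu> i / m) ^ d)" for i
  have h_exp: "h j = (\<Sum>i<n. a i * q i j)" if "j < n" for j
    unfolding a_def using orthonormal_expansion[OF orth that] .
  have "a 0 = (1 / sqrt (real n)) * (\<Sum>j<n. h j)"
    by (simp add: a_def dot_def q0 sum_distrib_left)
  then have a0: "a 0 = 0" using h by simp
  have G_exp: "G j = (\<Sum>i<n. (a i * p i) * q i j)" if "j < n" for j
    using swap_series_eigenbasis[OF g ne eig h_exp that, of D] by (simp add: G_def p_def m_def)
  have p: "(a i * p i)\<^sup>2 \<le> (3 / c)\<^sup>2 * (a i)\<^sup>2" if "i < n" for i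
  proof (cases "i = 0")
    case False
    then have "\<bar>p i\<bar> \<le> 3 / c"
      unfolding p_def using \<mu>[of i] that m l2
      by (intro abs_geometric_series_le) (auto simp: c_def m_def field_simps)
    then have "(p i)\<^sup>2 \<le> (3 / c)\<^sup>2" using power_mono[of "\<bar>p i\<bar>" "3 / c" 2] by simp
    then show ?thesis by (simp add: power_mult_distrib mult_left_mono mult.commute)
  qed (simp add: a0)
  have "dot n G G = (\<Sum>i<n. (a i * p i) * (a i * p i))"
    by (rule dot_self_orthonormal_expansion[OF orth G_exp])
  also have "\<dots> \<le> (\<Sum>i<n. (3 / c)\<^sup>2 * (a i * a i))"
    using p by (intro sum_mono) (simp add: power2_eq_square)
  also have "\<dots> = (3 / c)\<^sup>2 * dot n h h"
    by (simp add: dot_self_orthonormal_expansion[OF orth h_exp] sum_distrib_left)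
  finally show ?thesis by (simp add: c_def m_def)
qed

subsection \<open>Sums over edge sequences\<close>

definition lists_of_length :: "'a set \<Rightarrow> nat \<Rightarrow> 'a list set" where
  "lists_of_length A t = {xs. length xs = t \<and> set xs \<subseteq> A}"

lemma finite_lists_of_length: "finite A \<Longrightarrow> finite (lists_of_length A t)"
  unfolding lists_of_length_def using finite_lists_length_eq[of A t] by (simp add: conj_commute)

lemma card_lists_of_length: "finite A \<Longrightarrow> card (lists_of_length A t) = card A ^ t"
  unfolding lists_of_length_def using card_lists_length_eq[of A t] by (simp add: conj_commute)

lemma sum_lists_of_length_add:
  "(\<Sum>zs\<in>lists_of_length A (a + b). F zs) = (\<Sum>xs\<in>lists_of_length A a. \<Sum>ys\<in>lists_of_length A b. F (xs @ ys))"
proof -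
  let ?app = "\<lambda>(xs, ys). xs @ ys"
  have "lists_of_length A (a + b) = ?app ` (lists_of_length A a \<times> lists_of_length A b)"
  proof
    show "lists_of_length A (a + b) \<subseteq> ?app ` (lists_of_length A a \<times> lists_of_length A b)"
    proof
      fix zs assume "zs \<in> lists_of_length A (a + b)"
      then have "(take a zs, drop a zs) \<in> lists_of_length A a \<times> lists_of_length A b"
        by (auto simp: lists_of_length_def dest: in_set_takeD in_set_dropD)
      then show "zs \<in> ?app ` (lists_of_length A a \<times> lists_of_length A b)"
        by (metis (no_types, lifting) append_take_drop_id case_prod_conv image_eqI)
    qed
  qed (auto simp: lists_of_length_def)
  moreover have "inj_on ?app (lists_of_length A a \<times> lists_of_length A b)"
    by (auto simp: inj_on_def lists_of_length_def)
  ultimately show ?thesis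
    by (simp add: sum.reindex sum.cartesian_product split_def)
qed

lemma sum_lists_of_length_take:
  assumes "finite A" "d \<le> t"
  shows "(\<Sum>zs\<in>lists_of_length A t. F (take d zs)) = real (card A) ^ (t - d) * (\<Sum>xs\<in>lists_of_length A d. F xs)"
proof -
  have "(\<Sum>zs\<in>lists_of_length A t. F (take d zs)) = (\<Sum>zs\<in>lists_of_length A (d + (t - d)). F (take d zs))"
    using assms(2) by simp
  also have "\<dots> = (\<Sum>xs\<in>lists_of_length A d. \<Sum>ys\<in>lists_of_length A (t - d). F (take d (xs @ ys)))"
    by (rule sum_lists_of_length_add)
  also have "\<dots> = (\<Sum>xs\<in>lists_of_length A d. \<Sum>ys\<in>lists_of_length A (t - d). F xs)"
    by (intro sum.cong refl) (simp add: lists_of_length_def)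
  finally show ?thesis
    by (simp add: card_lists_of_length[OF assms(1)] sum_distrib_left)
qed

lemma sum_lists_of_length_Suc:
  "(\<Sum>zs\<in>lists_of_length A (Suc d). F zs) = (\<Sum>a\<in>A. \<Sum>xs\<in>lists_of_length A d. F (a # xs))"
proof -
  have "lists_of_length A (Suc d) = (\<lambda>(a, xs). a # xs) ` (A \<times> lists_of_length A d)"
    by (auto simp: lists_of_length_def length_Suc_conv image_iff)
  moreover have "inj_on (\<lambda>(a, xs). a # xs) (A \<times> lists_of_length A d)"
    by (auto simp: inj_on_def)
  ultimately show ?thesis
    by (simp add: sum.reindex sum.cartesian_product split_def)
qed

lemma sum_swaps_perm:
  assumes "finite E"
  shows "(\<Sum>es\<in>lists_of_length E d. \<phi> (swaps_perm es k)) = real (card E) ^ d * (swap_average E ^^ d) \<phi> k"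
proof (induction d arbitrary: \<phi>)
  case 0
  have "lists_of_length E 0 = {[]}" by (auto simp: lists_of_length_def)
  then show ?case by simp
next
  case (Suc d)
  have avg: "(\<Sum>e\<in>E. \<phi> (edge_transp e j)) = real (card E) * swap_average E \<phi> j" for j
    using assms by (cases "E = {}") (simp_all add: swap_average_def)
  have "(\<Sum>es\<in>lists_of_length E (Suc d). \<phi> (swaps_perm es k))
        = (\<Sum>es\<in>lists_of_length E d. \<Sum>e\<in>E. \<phi> (edge_transp e (swaps_perm es k)))"
    by (simp add: sum_lists_of_length_Suc sum.swap[of _ E])
  also have "\<dots> = real (card E) * (\<Sum>es\<in>lists_of_length E d. swap_average E \<phi> (swaps_perm es k))"
    by (simp add: avg sum_distrib_left)
  also have "\<dots> = real (card E) ^ Suc d * (swap_average E ^^ Suc d) \<phi> k"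
    by (simp add: Suc.IH funpow_Suc_right del: funpow.simps)
  finally show ?case .
qed

lemma sum_swaps_perm_take:
  assumes "finite E" "d \<le> N"
  shows "(\<Sum>ys\<in>lists_of_length E N. \<phi> (swaps_perm (take d ys) k)) = real (card E) ^ N * (swap_average E ^^ d) \<phi> k"
proof -
  have "N - d + d = N" using assms(2) by simp
  then show ?thesis
    using sum_lists_of_length_take[OF assms, of "\<lambda>ys. \<phi> (swaps_perm ys k)"]
    by (simp add: sum_swaps_perm[OF assms(1)] power_add[symmetric])
qed

subsection \<open>The GoRank estimator\<close>

lemma gorank_R'_eq_average:
  "real t * gorank_R' X es k t = (\<Sum>s<t. if X k > gorank_Y X es s k then 1 else 0)"
proof (induction t)
  case (Suc t)
  have "N * ((1 - 1 / N) * a + 1 / N * z) = (N - 1) * a + z" if "N \<noteq> 0" for N a z :: real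
    using that by (simp add: algebra_simps)
  from this[of "real (Suc t)"] show ?case using Suc.IH by simp
qed simp

lemma square_sum_eq_forward_sums:
  fixes w :: "nat \<Rightarrow> real"
  shows "(\<Sum>s<t. w s)\<^sup>2 = (\<Sum>s<t. w s * (w s + 2 * (\<Sum>d=1..t - Suc s. w (s + d))))"
proof (induction t)
  case (Suc t)
  have "(\<Sum>d=1..Suc t - Suc s. w (s + d)) = (\<Sum>d=1..t - Suc s. w (s + d)) + w t" if "s < t" for s
  proof -
    have "{1..Suc t - Suc s} = insert (Suc (t - Suc s)) {1..t - Suc s}" using that by auto
    then show ?thesis using that by simp
  qed
  then have "(\<Sum>s<t. w s * (w s + 2 * (\<Sum>d=1..Suc t - Suc s. w (s + d))))
      = (\<Sum>s<t. w s * (w s + 2 * (\<Sum>d=1..t - Suc s. w (s + d)))) + 2 * w t * (\<Sum>s<t. w s)"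
    by (simp add: algebra_simps sum.distrib sum_distrib_left)
  then show ?case using Suc.IH by (simp add: power2_eq_square algebra_simps)
qed simp

definition comparison_dev :: "(nat \<Rightarrow> real) \<Rightarrow> nat set list \<Rightarrow> nat \<Rightarrow> real \<Rightarrow> nat \<Rightarrow> real" where
  "comparison_dev X es k u s = (if X k > gorank_Y X es s k then 1 else 0) - u"

lemma gorank_R_deviation:
  assumes "0 < n" "0 < t"
  shows "gorank_R n X es k t - rank n X k
           = real n / real t * (\<Sum>s<t. comparison_dev X es k ((rank n X k - 1) / real n) s)"
proof -
  define I where "I = (\<Sum>s<t. if X k > gorank_Y X es s k then 1 else (0::real))"
  define u where "u = (rank n X k - 1) / real n"
  have "gorank_R' X es k t = I / real t"
    using gorank_R'_eq_average[of t X es k] assms(2) by (simp add: I_def field_simps)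
  moreover have "I = real t * u + (\<Sum>s<t. comparison_dev X es k u s)"
    by (simp add: comparison_dev_def I_def sum_subtractf)
  moreover have "rank n X k = real n * u + 1" using assms(1) by (simp add: u_def)
  ultimately show ?thesis
    using assms by (simp add: gorank_R_def u_def[symmetric] field_simps)
qed

lemma rank_bounds: "1 \<le> rank n X k" "rank n X k \<le> 1 + real n"
  unfolding rank_def using sum_mono[of "{..<n}" "\<lambda>l. if X k > X l then 1 else 0" "\<lambda>_. 1::real"]
  by (auto intro: sum_nonneg)

lemma centred_indicator_perm:
  fixes f :: "nat \<Rightarrow> real"
  assumes \<pi>: "bij_betw \<pi> {..<n} {..<n}" and "0 < n" and f: "\<And>i. f i = 0 \<or> f i = 1"
  defines "u \<equiv> (\<Sum>i<n. f i) / real n"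
  shows "(\<Sum>j<n. f (\<pi> j) - u) = 0"
    and "dot n (\<lambda>j. f (\<pi> j) - u) (\<lambda>j. f (\<pi> j) - u) = real n * u * (1 - u)"
proof -
  have S: "(\<Sum>i<n. f i) = real n * u" using \<open>0 < n\<close> by (simp add: u_def)
  show "(\<Sum>j<n. f (\<pi> j) - u) = 0"
    using sum.reindex_bij_betw[OF \<pi>, of "\<lambda>i. f i - u"] S by (simp add: sum_subtractf)
  have "dot n (\<lambda>j. f (\<pi> j) - u) (\<lambda>j. f (\<pi> j) - u) = (\<Sum>i<n. (f i - u) * (f i - u))"
    unfolding dot_def by (rule sum.reindex_bij_betw[OF \<pi>, of "\<lambda>i. (f i - u) * (f i - u)"])
  also have "\<dots> = (\<Sum>i<n. f i - 2 * u * f i + u * u)"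
  proof (intro sum.cong refl)
    fix i
    have "f i * f i = f i" using f[of i] by auto
    then show "(f i - u) * (f i - u) = f i - 2 * u * f i + u * u" by (simp add: algebra_simps)
  qed
  also have "\<dots> = (\<Sum>i<n. f i) - 2 * u * (\<Sum>i<n. f i) + real n * u * u"
    by (simp add: sum.distrib sum_subtractf sum_distrib_left)
  also have "\<dots> = real n * u * (1 - u)"
    by (simp add: S algebra_simps)
  finally show "dot n (\<lambda>j. f (\<pi> j) - u) (\<lambda>j. f (\<pi> j) - u) = real n * u * (1 - u)" .
qed

lemma gorank_Y_append:
  assumes "length xs = s" "d \<le> length ys"
  shows "gorank_Y X (xs @ ys) (s + d) k = X (swaps_perm xs (swaps_perm (take d ys) k))"
  using assms gorank_Y_eq_comp[of "s + d" "xs @ ys" X] by (simp add: swaps_perm_append)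

lemma sum_continuations:
  fixes X :: "nat \<Rightarrow> real" and u :: real and k :: nat
  assumes "finite E" "length xs = s" "s < t"
  defines "h \<equiv> \<lambda>j. (if X k > X (swaps_perm xs j) then 1 else 0) - u"
  shows "(\<Sum>ys\<in>lists_of_length E (t - s). comparison_dev X (xs @ ys) k u s
            * (comparison_dev X (xs @ ys) k u s + 2 * (\<Sum>d=1..t - Suc s. comparison_dev X (xs @ ys) k u (s + d))))
       = real (card E) ^ (t - s) * (h k * (h k + 2 * (\<Sum>d=1..t - Suc s. (swap_average E ^^ d) h k)))"
proof -
  define m where "m = real (card E)"
  have step: "comparison_dev X (xs @ ys) k u (s + d) = h (swaps_perm (take d ys) k)"
    if "ys \<in> lists_of_length E (t - s)" "d \<le> t - s" for ys d
    using that gorank_Y_append[OF assms(2), of d ys X k]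
    by (simp add: h_def comparison_dev_def lists_of_length_def)
  have "(\<Sum>ys\<in>lists_of_length E (t - s). comparison_dev X (xs @ ys) k u s
            * (comparison_dev X (xs @ ys) k u s + 2 * (\<Sum>d=1..t - Suc s. comparison_dev X (xs @ ys) k u (s + d))))
      = (\<Sum>ys\<in>lists_of_length E (t - s). h k * h k + 2 * h k * (\<Sum>d=1..t - Suc s. h (swaps_perm (take d ys) k)))"
  proof (intro sum.cong refl)
    fix ys assume ys: "ys \<in> lists_of_length E (t - s)"
    have "(\<Sum>d=1..t - Suc s. comparison_dev X (xs @ ys) k u (s + d))
        = (\<Sum>d=1..t - Suc s. h (swaps_perm (take d ys) k))"
    proof (intro sum.cong refl)
      fix d assume "d \<in> {1..t - Suc s}"
      then have "d \<le> t - s" by (simp only: atLeastAtMost_iff) linarith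
      then show "comparison_dev X (xs @ ys) k u (s + d) = h (swaps_perm (take d ys) k)" by (rule step[OF ys])
    qed
    then show "comparison_dev X (xs @ ys) k u s
            * (comparison_dev X (xs @ ys) k u s + 2 * (\<Sum>d=1..t - Suc s. comparison_dev X (xs @ ys) k u (s + d)))
        = h k * h k + 2 * h k * (\<Sum>d=1..t - Suc s. h (swaps_perm (take d ys) k))"
      using step[OF ys, of 0] by (simp add: algebra_simps)
  qed
  also have "\<dots> = m ^ (t - s) * (h k * h k)
      + 2 * h k * (\<Sum>ys\<in>lists_of_length E (t - s). \<Sum>d=1..t - Suc s. h (swaps_perm (take d ys) k))"
    by (simp add: sum.distrib sum_distrib_left card_lists_of_length[OF assms(1)] m_def)
  also have "(\<Sum>ys\<in>lists_of_length E (t - s). \<Sum>d=1..t - Suc s. h (swaps_perm (take d ys) k))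
      = (\<Sum>d=1..t - Suc s. \<Sum>ys\<in>lists_of_length E (t - s). h (swaps_perm (take d ys) k))"
    by (rule sum.swap)
  also have "\<dots> = (\<Sum>d=1..t - Suc s. m ^ (t - s) * (swap_average E ^^ d) h k)"
  proof (intro sum.cong refl)
    fix d assume "d \<in> {1..t - Suc s}"
    then have "d \<le> t - s" by (simp only: atLeastAtMost_iff) linarith
    then show "(\<Sum>ys\<in>lists_of_length E (t - s). h (swaps_perm (take d ys) k)) = m ^ (t - s) * (swap_average E ^^ d) h k"
      unfolding m_def by (rule sum_swaps_perm_take[OF assms(1)])
  qed
  finally show ?thesis by (simp add: m_def sum_distrib_left algebra_simps)
qed

lemma centred_comparison_series_le:
  fixes f :: "nat \<Rightarrow> real"
  assumes g: "graph_on n E" and conn: "connected_graph n E" and n: "2 \<le> n" and k: "k < n"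
    and \<pi>: "bij_betw \<pi> {..<n} {..<n}" and f: "\<And>i. f i = 0 \<or> f i = 1"
  defines "u \<equiv> (\<Sum>i<n. f i) / real n"
  defines "h \<equiv> \<lambda>j. f (\<pi> j) - u"
  shows "h k * (h k + 2 * (\<Sum>d=1..D. (swap_average E ^^ d) h k))
           \<le> 3 / (lambda2 n E / real (card E)) * (real n * u * (1 - u))"
proof -
  have "0 < n" using n by simp
  note centred = centred_indicator_perm[where f = f, OF \<pi> this f, folded u_def h_def]
  have "0 \<le> 3 / (lambda2 n E / real (card E))"
    using spectral_gap_pos[OF g conn n] by (intro divide_nonneg_pos) auto
  from mult_le_of_dot_le[OF dot_swap_series_le[OF g conn n centred(1)] this k]
  show ?thesis using centred(2) by simp
qed

lemma sum_forward_term_le: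
  fixes X :: "nat \<Rightarrow> real"
  assumes g: "graph_on n E" and conn: "connected_graph n E" and n: "2 \<le> n" and k: "k < n"
    and "s < t"
  defines "u \<equiv> (rank n X k - 1) / real n"
  shows "(\<Sum>es\<in>lists_of_length E t. comparison_dev X es k u s
            * (comparison_dev X es k u s + 2 * (\<Sum>d=1..t - Suc s. comparison_dev X es k u (s + d))))
         \<le> real (card E) ^ t * (3 / (lambda2 n E / real (card E)) * (real n * u * (1 - u)))"
proof -
  have fin: "finite E" by (rule graph_on_finite[OF g])
  define C where "C = 3 / (lambda2 n E / real (card E)) * (real n * u * (1 - u))"
  define f where "f i = (if X k > X i then 1 else 0 :: real)" for i
  have u: "u = (\<Sum>i<n. f i) / real n" by (simp add: u_def rank_def f_def)
  have f01: "f i = 0 \<or> f i = 1" for i by (simp add: f_def)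
  have "(\<Sum>es\<in>lists_of_length E t. comparison_dev X es k u s
            * (comparison_dev X es k u s + 2 * (\<Sum>d=1..t - Suc s. comparison_dev X es k u (s + d))))
      = (\<Sum>xs\<in>lists_of_length E s. \<Sum>ys\<in>lists_of_length E (t - s). comparison_dev X (xs @ ys) k u s
            * (comparison_dev X (xs @ ys) k u s + 2 * (\<Sum>d=1..t - Suc s. comparison_dev X (xs @ ys) k u (s + d))))"
    using sum_lists_of_length_add[of _ E s "t - s"] \<open>s < t\<close> by simp
  also have "\<dots> \<le> (\<Sum>xs\<in>lists_of_length E s. real (card E) ^ (t - s) * C)"
  proof (intro sum_mono)
    fix xs assume xs: "xs \<in> lists_of_length E s"
    then have "bij_betw (swaps_perm xs) {..<n} {..<n}"
      using bij_betw_swaps_perm[OF g] by (simp add: lists_of_length_def)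
    note bound = centred_comparison_series_le[where f = f, OF g conn n k this f01, where D = "t - Suc s",
        folded u, unfolded f_def]
    have "length xs = s" using xs by (simp add: lists_of_length_def)
    show "(\<Sum>ys\<in>lists_of_length E (t - s). comparison_dev X (xs @ ys) k u s
            * (comparison_dev X (xs @ ys) k u s + 2 * (\<Sum>d=1..t - Suc s. comparison_dev X (xs @ ys) k u (s + d))))
          \<le> real (card E) ^ (t - s) * C"
      unfolding sum_continuations[OF fin \<open>length xs = s\<close> \<open>s < t\<close>, where X = X and k = k and u = u] C_def
      by (intro mult_left_mono bound) simp
  qed
  also have "\<dots> = real (card E) ^ t * C"
    using \<open>s < t\<close> by (simp add: card_lists_of_length[OF fin] power_add[symmetric])
  finally show ?thesis by (simp add: C_def)
qed

lemma sum_square_comparison_dev_le: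
  fixes X :: "nat \<Rightarrow> real"
  assumes "graph_on n E" "connected_graph n E" "2 \<le> n" "k < n"
  defines "u \<equiv> (rank n X k - 1) / real n"
  shows "(\<Sum>es\<in>lists_of_length E t. (\<Sum>s<t. comparison_dev X es k u s)\<^sup>2)
         \<le> real t * real (card E) ^ t * (3 / (lambda2 n E / real (card E)) * (real n * u * (1 - u)))"
proof -
  have "(\<Sum>es\<in>lists_of_length E t. (\<Sum>s<t. comparison_dev X es k u s)\<^sup>2)
      = (\<Sum>s<t. \<Sum>es\<in>lists_of_length E t. comparison_dev X es k u s
            * (comparison_dev X es k u s + 2 * (\<Sum>d=1..t - Suc s. comparison_dev X es k u (s + d))))"
    by (simp only: square_sum_eq_forward_sums sum.swap[of _ "lists_of_length E t"])
  also have "\<dots> \<le> (\<Sum>s<t. real (card E) ^ t * (3 / (lambda2 n E / real (card E)) * (real n * u * (1 - u))))"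
    using sum_forward_term_le[OF assms(1-4)] by (intro sum_mono) (simp add: u_def)
  finally show ?thesis by simp
qed

lemma set_pmf_edge_seqs:
  assumes "finite E" "E \<noteq> {}"
  shows "set_pmf (edge_seqs E t) = lists_of_length E t"
proof -
  obtain e where "e \<in> E" using assms(2) by blast
  then have "replicate t e \<in> lists_of_length E t" by (auto simp: lists_of_length_def)
  then have "lists_of_length E t \<noteq> {}" by blast
  then show ?thesis
    by (simp add: edge_seqs_def lists_of_length_def[symmetric] finite_lists_of_length[OF assms(1)])
qed

lemma expectation_edge_seqs:
  assumes "finite E" "E \<noteq> {}"
  shows "measure_pmf.expectation (edge_seqs E t) f = (\<Sum>es\<in>lists_of_length E t. f es) / real (card E) ^ t"
proof -
  have "lists_of_length E t \<noteq> {}" using set_pmf_edge_seqs[OF assms] set_pmf_not_empty by metis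
  then show ?thesis
    using integral_pmf_of_set[of "lists_of_length E t" f] finite_lists_of_length[OF assms(1)]
    by (simp add: edge_seqs_def lists_of_length_def[symmetric] card_lists_of_length[OF assms(1)])
qed

lemma gorank_mean_square_error_le:
  fixes X :: "nat \<Rightarrow> real"
  assumes n: "2 \<le> n" and g: "graph_on n E" and conn: "connected_graph n E" and k: "k < n" and t: "1 \<le> t"
  defines "c \<equiv> lambda2 n E / real (card E)" and "u \<equiv> (rank n X k - 1) / real n"
  shows "measure_pmf.expectation (edge_seqs E t) (\<lambda>es. \<bar>gorank_R n X es k t - rank n X k\<bar>\<^sup>2)
           \<le> 3 / (c * real t) * (real n ^ 3 * (u * (1 - u)))"
proof -
  have fin: "finite E" and ne: "E \<noteq> {}" using graph_on_finite[OF g] edges_nonempty[OF conn n] .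
  define m where "m = real (card E)"
  have m: "0 < m" using fin ne by (simp add: m_def card_gt_0_iff)
  have c: "0 < c" using spectral_gap_pos[OF g conn n] by (simp add: c_def)
  have "\<bar>gorank_R n X es k t - rank n X k\<bar>\<^sup>2 = (real n / real t)\<^sup>2 * (\<Sum>s<t. comparison_dev X es k u s)\<^sup>2"
    for es
    using gorank_R_deviation[of n t X es k] n t by (simp add: u_def power_divide power_mult_distrib)
  then have "measure_pmf.expectation (edge_seqs E t) (\<lambda>es. \<bar>gorank_R n X es k t - rank n X k\<bar>\<^sup>2)
      = (real n / real t)\<^sup>2 * (\<Sum>es\<in>lists_of_length E t. (\<Sum>s<t. comparison_dev X es k u s)\<^sup>2) / m ^ t"
    by (simp only: expectation_edge_seqs[OF fin ne] sum_distrib_left m_def)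
  also have "\<dots> \<le> (real n / real t)\<^sup>2 * (real t * m ^ t * (3 / c * (real n * u * (1 - u)))) / m ^ t"
    using sum_square_comparison_dev_le[OF g conn n k, where t = t and X = X] m
    by (intro divide_right_mono mult_left_mono) (simp_all add: u_def c_def m_def)
  also have "\<dots> = 3 / (c * real t) * (real n ^ 3 * (u * (1 - u)))"
    using m t c by (simp add: field_simps power2_eq_square power3_eq_cube)
  finally show ?thesis .
qed

lemma powr_three_halves_squared:
  fixes x :: real
  assumes "0 < x"
  shows "(x powr (3/2))\<^sup>2 = x ^ 3"
proof -
  have "(x powr (3/2))\<^sup>2 = x powr (real 2 * (3/2))"
    using assms by (simp add: powr_power)
  also have "\<dots> = x ^ 3"
    using assms by (simp add: powr_numeral)
  finally show ?thesis .
qed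

lemma (in prob_space) expectation_abs_le_sqrt_second_moment:
  fixes Z :: "'a \<Rightarrow> real"
  assumes "integrable M Z" "integrable M (\<lambda>x. (Z x)\<^sup>2)"
  shows "expectation (\<lambda>x. \<bar>Z x\<bar>) \<le> sqrt (expectation (\<lambda>x. \<bar>Z x\<bar>\<^sup>2))"
proof -
  have "(expectation (\<lambda>x. \<bar>Z x\<bar>))\<^sup>2 \<le> expectation (\<lambda>x. \<bar>Z x\<bar>\<^sup>2)"
    using variance_eq[of "\<lambda>x. \<bar>Z x\<bar>"] variance_positive[of "\<lambda>x. \<bar>Z x\<bar>"] assms by simp
  then show ?thesis by (rule real_le_rsqrt)
qed

theorem theorem2:
  fixes n :: nat and E :: "nat set set" and X :: "nat \<Rightarrow> real" and k t :: nat
  assumes "n \<ge> 2"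
    and "graph_on n E"
    and "connected_graph n E"
    and "\<not> bipartite_graph n E"
    and "inj_on X {0..<n}"
    and "k < n"
    and "t \<ge> 1"
  defines "c \<equiv> lambda2 n E / real (card E)"
    and "u \<equiv> (rank n X k - 1) / real n"
  defines "\<sigma> \<equiv> real n powr (3/2) * sqrt (u * (1 - u))"
  shows "measure_pmf.expectation (edge_seqs E t)
           (\<lambda>es. \<bar>gorank_R n X es k t - rank n X k\<bar>^2) \<le> 3 / (c * real t) * \<sigma>^2
       \<and> measure_pmf.expectation (edge_seqs E t)
           (\<lambda>es. \<bar>gorank_R n X es k t - rank n X k\<bar>) \<le> sqrt (3 / (c * real t)) * \<sigma>"
proof -
  have u: "0 \<le> u" "u \<le> 1"
    using rank_bounds[of n X k] assms(1) by (auto simp: u_def field_simps)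
  then have "0 \<le> \<sigma>" by (simp add: \<sigma>_def)
  have "\<sigma>\<^sup>2 = real n ^ 3 * (u * (1 - u))"
    using u assms(1) by (simp add: \<sigma>_def power_mult_distrib powr_three_halves_squared)
  then have mse: "measure_pmf.expectation (edge_seqs E t) (\<lambda>es. \<bar>gorank_R n X es k t - rank n X k\<bar>\<^sup>2)
      \<le> 3 / (c * real t) * \<sigma>\<^sup>2"
    using gorank_mean_square_error_le[OF assms(1-3,6,7)] by (simp add: c_def u_def)
  have "finite (set_pmf (edge_seqs E t))"
    using set_pmf_edge_seqs graph_on_finite[OF assms(2)] edges_nonempty[OF assms(3,1)]
      finite_lists_of_length by simp
  then have "measure_pmf.expectation (edge_seqs E t) (\<lambda>es. \<bar>gorank_R n X es k t - rank n X k\<bar>)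
      \<le> sqrt (measure_pmf.expectation (edge_seqs E t) (\<lambda>es. \<bar>gorank_R n X es k t - rank n X k\<bar>\<^sup>2))"
    by (intro measure_pmf.expectation_abs_le_sqrt_second_moment integrable_measure_pmf_finite)
  also have "\<dots> \<le> sqrt (3 / (c * real t) * \<sigma>\<^sup>2)"
    using mse by (rule real_sqrt_le_mono)
  also have "\<dots> = sqrt (3 / (c * real t)) * sqrt (\<sigma>\<^sup>2)" by (rule real_sqrt_mult)
  also have "\<dots> = sqrt (3 / (c * real t)) * \<sigma>" using \<open>0 \<le> \<sigma>\<close> by simp
  finally show ?thesis using mse by simp
qed

end
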